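(* For every $s\in(0,1)$ (with $\alpha=s+2$) there exists $C>0$ such that for all $n\ge1$ and all $x,y\in\Lambda_n\times\{0\}$, $G_{D_n,\mathbf a}(x,y)\le C\,n^{\alpha-2}$.
   Context: Diamond graph $\mathcal D=\{(a,b)\in(\frac12\mathbb Z)^2:a+b\in\mathbb Z\}$, edges between points differing by $(\pm\frac12,\pm\frac12)$. $\Lambda_n=\{-n,\dots,n\}$, $L_n=\{(k,0):k\in\mathbb Z,|k|\ge n+1\}$, $D_n=\mathcal D\setminus L_n$. $Q_s$: kernel on $\mathbb N$ with $Q_s(0,1)=1$, $Q_s(r,r+1)=\max(\frac12-\frac s{4r},\frac14)$, $Q_s(r,r-1)=1-Q_s(r,r+1)$ for $r\ge1$. The random walk in conductances $\mathbf a=\mathbf a(s)$ on $\mathcal D$: its horizontal coordinate is a simple random walk on $\frac12\mathbb Z$; independently, its height $h$ evolves by: from $h=r/2$ with $r\ge1$ to $(r+1)/2$ with probability $Q_s(r,r+1)$, else to $(r-1)/2$; symmetrically for negative heights; from height $0$ to $\pm\frac12$ with probability $\frac12$ each. $G_{D_n,\mathbf a}(x,y)$ is the expected number of visits to $y$ by this walk started at $x$ before it first hits $L_n$. *)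

theory Defs
  imports "HOL-Analysis.Analysis"
begin

text \<open>Encoding: a point (a,b) of the diamond graph D (a,b in (1/2)Z, a+b in Z) is
represented by its doubled coordinates (u,v) = (2a,2b) :: int * int, with u+v even.
Edges of D correspond to steps (+-1,+-1) in doubled coordinates.\<close>

definition in_diamond :: "int \<times> int \<Rightarrow> bool" where
  "in_diamond p \<longleftrightarrow> even (fst p + snd p)"

definition Qup :: "real \<Rightarrow> nat \<Rightarrow> real" where
  "Qup s r = (if r = 0 then 1 else max (1/2 - s / (4 * real r)) (1/4))"

text \<open>Transition probability of the height (doubled: height h = v/2, r = |v|).\<close>
definition hstep :: "real \<Rightarrow> int \<Rightarrow> int \<Rightarrow> real" where
  "hstep s v v' =
    (if v = 0 then (if v' = 1 \<or> v' = -1 then 1/2 else 0)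
     else if v > 0 then
       (if v' = v + 1 then Qup s (nat v) else if v' = v - 1 then 1 - Qup s (nat v) else 0)
     else
       (if v' = v - 1 then Qup s (nat (-v)) else if v' = v + 1 then 1 - Qup s (nat (-v)) else 0))"

text \<open>One-step transition of the walk in conductances a(s): horizontal coordinate is
a simple random walk on (1/2)Z, independent of the height chain.\<close>
definition wstep :: "real \<Rightarrow> int \<times> int \<Rightarrow> int \<times> int \<Rightarrow> real" where
  "wstep s p q = (if \<bar>fst q - fst p\<bar> = 1 then 1/2 else 0) * hstep s (snd p) (snd q)"

text \<open>L_n = {(k,0) : k in Z, |k| >= n+1}, in doubled coordinates.\<close>
definition Lset :: "nat \<Rightarrow> (int \<times> int) set" where
  "Lset n = {p. snd p = 0 \<and> even (fst p) \<and> \<bar>fst p\<bar> \<ge> 2 * (int n + 1)}"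

definition nbrs :: "int \<times> int \<Rightarrow> (int \<times> int) set" where
  "nbrs q = (\<lambda>(i, j). (fst q + i, snd q + j)) ` ({-1, 1} \<times> {-1, 1})"

text \<open>killed_prob s n k x y = P_x(X_k = y and X_j \<notin> L_n for all j <= k).\<close>
fun killed_prob :: "real \<Rightarrow> nat \<Rightarrow> nat \<Rightarrow> int \<times> int \<Rightarrow> int \<times> int \<Rightarrow> real" where
  "killed_prob s n 0 x y = (if x = y \<and> x \<notin> Lset n then 1 else 0)"
| "killed_prob s n (Suc k) x y =
     (if y \<in> Lset n then 0
      else (\<Sum>z\<in>nbrs y. killed_prob s n k x z * wstep s z y))"

definition green :: "real \<Rightarrow> nat \<Rightarrow> int \<times> int \<Rightarrow> int \<times> int \<Rightarrow> ennreal" where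
  "green s n x y = (\<Sum>k. ennreal (killed_prob s n k x y))"

end

theory Submission
  imports Defs "HOL-Library.Groups_Big_Fun"
begin

text \<open>
  A first-passage decomposition gives G(x,y) <= G(y,y), and a renewal argument gives
  G(y,y) <= 24 (p_0(y,y) + ... + p_(T-1)(y,y)) as soon as the walk started at y is killed on L_n
  before time T with probability at least 1/24. With T of order n^2 this holds because the
  expected number of visits of the free walk to L_n before T is at least of order R(T) - R(n^2)
  (after n^2 steps the horizontal walk is outside Lambda_n with probability at least 1/12, by
  Paley-Zygmund) and at most P(hit L_n before T) R(T), where R(k), of order k^((1+s)/2), is the
  expected number of visits of the height to 0 before time k, computed from a harmonic scale
  function of the height chain. Finally p_k(y,y) is at most the free return probability
  P(S_k = 0) P(h_k = 0) <= k^(-1/2) P(h_k = 0), and summing over dyadic blocks of k gives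
  O(T^(s/2)) = O(n^s).
\<close>

lemma Sum_any_sum:
  fixes g :: "'i \<Rightarrow> 'a \<Rightarrow> 'b::comm_monoid_add"
  assumes "finite J" "\<And>j. j \<in> J \<Longrightarrow> finite {a. g j a \<noteq> 0}"
  shows "Sum_any (\<lambda>a. \<Sum>j\<in>J. g j a) = (\<Sum>j\<in>J. Sum_any (g j))"
  using assms
proof (induction J rule: finite_induct)
  case (insert j J)
  have "finite {a. (\<Sum>j\<in>J. g j a) \<noteq> 0}"
    by (rule finite_subset[of _ "\<Union>j\<in>J. {a. g j a \<noteq> 0}"])
       (use insert in \<open>auto elim: sum.not_neutral_contains_not_neutral\<close>)
  then show ?case
    using insert by (simp add: Sum_any.distrib)
qed simp

lemma Sum_any_mono:
  fixes g h :: "'a \<Rightarrow> 'b::ordered_comm_monoid_add"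
  assumes "finite {a. g a \<noteq> 0}" "finite {a. h a \<noteq> 0}" "\<And>a. g a \<le> h a"
  shows "Sum_any g \<le> Sum_any h"
proof -
  let ?S = "{a. g a \<noteq> 0} \<union> {a. h a \<noteq> 0}"
  have "Sum_any g = sum g ?S" "Sum_any h = sum h ?S"
    by (rule Sum_any.expand_superset; use assms in auto)+
  then show ?thesis
    using assms by (simp add: sum_mono)
qed

lemma Sum_any_nonneg:
  fixes g :: "'a \<Rightarrow> 'b::ordered_comm_monoid_add"
  shows "(\<And>a. 0 \<le> g a) \<Longrightarrow> 0 \<le> Sum_any g"
  unfolding Sum_any.expand_set by (auto intro: sum_nonneg)

lemma Sum_any_shift_int: "Sum_any (\<lambda>d::int. g (d + c)) = Sum_any g"
  by (rule Sum_any.reindex_cong[of "\<lambda>d. d + c", symmetric])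
     (auto simp: bij_def inj_def image_def intro!: exI[of _ "_ - c"])

lemma finite_nonzero_shift_int:
  "finite {d. g d \<noteq> 0} \<Longrightarrow> finite {u. g (u + (c::int)) \<noteq> 0}"
  by (rule finite_subset[of _ "(\<lambda>d. d - c) ` {d. g d \<noteq> 0}"]) force+

lemma Sum_any_on_axis:
  fixes g :: "int \<Rightarrow> 'b::comm_monoid_add"
  assumes fin: "finite {u. g u \<noteq> 0}"
  shows "Sum_any (\<lambda>w::int \<times> int. if snd w = 0 then g (fst w) else 0) = Sum_any g"
proof -
  let ?S = "{u. g u \<noteq> 0}"
  have "Sum_any (\<lambda>w::int \<times> int. if snd w = 0 then g (fst w) else 0)
      = sum (\<lambda>w. if snd w = 0 then g (fst w) else 0) ((\<lambda>u. (u, 0::int)) ` ?S)"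
    by (rule Sum_any.expand_superset) (use fin in \<open>auto simp: image_iff prod_eq_iff\<close>)
  also have "\<dots> = sum g ?S"
    by (subst sum.reindex) (auto simp: inj_on_def)
  also have "\<dots> = Sum_any g"
    by (rule Sum_any.expand_superset[symmetric]) (use fin in auto)
  finally show ?thesis .
qed

lemma Sum_any_swap_support:
  assumes "finite A" "finite B" "\<And>a b. g a b \<noteq> 0 \<Longrightarrow> a \<in> A \<and> b \<in> B"
  shows "Sum_any (\<lambda>a. Sum_any (g a)) = Sum_any (\<lambda>b. Sum_any (\<lambda>a. g a b))"
  by (rule Sum_any.swap[of "A \<times> B"]) (use assms in auto)

lemma sum_convolution_le_product:
  fixes f g :: "nat \<Rightarrow> 'a::linordered_semiring"
  assumes "\<And>i. 0 \<le> f i" "\<And>i. 0 \<le> g i"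
  shows "(\<Sum>k<N. \<Sum>i\<le>k. f i * g (k - i)) \<le> (\<Sum>i<N. f i) * (\<Sum>j<N. g j)"
proof -
  have "(\<Sum>k<N. \<Sum>i\<le>k. f i * g (k - i)) = (\<Sum>(i,j)\<in>{(i,j). i + j < N}. f i * g j)"
    by (rule sum.triangle_reindex[symmetric])
  also have "\<dots> \<le> (\<Sum>(i,j)\<in>{..<N} \<times> {..<N}. f i * g j)"
    by (rule sum_mono2) (auto intro: mult_nonneg_nonneg assms)
  also have "\<dots> = (\<Sum>i<N. f i) * (\<Sum>j<N. g j)"
    by (simp add: sum.cartesian_product[symmetric] sum_product)
  finally show ?thesis .
qed

lemma ln_add_one_ge:
  fixes x :: real
  assumes "0 \<le> x"
  shows "2 * x / (2 + x) \<le> ln (1 + x)"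
proof -
  let ?f = "\<lambda>t::real. ln (1 + t) - 2 * t / (2 + t)"
  have "?f 0 \<le> ?f x"
  proof (rule DERIV_nonneg_imp_nondecreasing[OF assms])
    fix t :: real
    assume t: "0 \<le> t" "t \<le> x"
    have "(?f has_real_derivative (1 / (1 + t) - 4 / (2 + t)\<^sup>2)) (at t)"
      using t by (auto intro!: derivative_eq_intros simp: field_simps power2_eq_square)
    moreover have "4 * (1 + t) \<le> (2 + t)\<^sup>2"
      by (simp add: power2_eq_square algebra_simps)
    then have "0 \<le> 1 / (1 + t) - 4 / (2 + t)\<^sup>2"
      using t by (simp add: field_simps)
    ultimately show "\<exists>y. (?f has_real_derivative y) (at t) \<and> 0 \<le> y"
      by blast
  qed
  then show ?thesis
    by simp
qed

lemma ex_power_of_two_between: "(N::nat) \<ge> 1 \<Longrightarrow> \<exists>I. N \<le> 2 ^ I \<and> 2 ^ I < 2 * N"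
proof -
  assume N: "N \<ge> 1"
  define I where "I = (LEAST i. N \<le> 2 ^ i)"
  have "N \<le> 2 ^ N"
    by (simp add: less_imp_le less_exp)
  then have I: "N \<le> 2 ^ I"
    unfolding I_def by (rule LeastI)
  show ?thesis
  proof (cases I)
    case (Suc J)
    have "\<not> N \<le> 2 ^ J"
      using not_less_Least[of J "\<lambda>i. N \<le> 2 ^ i"] Suc I_def by auto
    then show ?thesis
      using I Suc by (intro exI[of _ I]) auto
  qed (use I N in \<open>auto intro: exI[of _ 0]\<close>)
qed

definition linf_ball :: "int \<times> int \<Rightarrow> nat \<Rightarrow> (int \<times> int) set" where
  "linf_ball x r = {fst x - int r .. fst x + int r} \<times> {snd x - int r .. snd x + int r}"

lemma finite_linf_ball [simp]: "finite (linf_ball x r)"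
  by (simp add: linf_ball_def)

lemma linf_ball_trans: "z \<in> linf_ball x j \<Longrightarrow> w \<in> linf_ball z i \<Longrightarrow> w \<in> linf_ball x (j + i)"
  unfolding linf_ball_def by auto

lemma nbrs_eq:
  "nbrs q = {(fst q - 1, snd q - 1), (fst q - 1, snd q + 1), (fst q + 1, snd q - 1), (fst q + 1, snd q + 1)}"
  unfolding nbrs_def by auto

lemma finite_nbrs [simp]: "finite (nbrs q)"
  by (simp add: nbrs_eq)

lemma nbrs_sym: "w \<in> nbrs z \<longleftrightarrow> z \<in> nbrs w"
  unfolding nbrs_eq by (cases z; cases w) auto

lemma nbrs_in_linf_ball_Suc: "z \<in> linf_ball x k \<Longrightarrow> w \<in> nbrs z \<Longrightarrow> w \<in> linf_ball x (Suc k)"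
  unfolding nbrs_eq linf_ball_def by (cases z; cases x) auto

lemma Qup_eq: "1 \<le> r \<Longrightarrow> 0 \<le> s \<Longrightarrow> s \<le> 1 \<Longrightarrow> Qup s r = 1/2 - s / (4 * real r)"
  unfolding Qup_def by (auto simp: divide_simps)

locale drift_param =
  fixes s :: real
  assumes s_pos: "0 < s" and s_less_1: "s < 1"
begin

lemma hstep_up: "d \<noteq> 0 \<Longrightarrow> hstep s d (d + 1) = 1/2 - s / (4 * real_of_int d)"
  and hstep_down: "d \<noteq> 0 \<Longrightarrow> hstep s d (d - 1) = 1/2 + s / (4 * real_of_int d)"
  using Qup_eq[of "nat d" s] Qup_eq[of "nat (-d)" s] s_pos s_less_1
  by (auto simp: hstep_def not_less)

lemma hstep_from_0: "hstep s 0 1 = 1/2" "hstep s 0 (-1) = 1/2"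
  unfolding hstep_def by auto

lemma hstep_eq_0: "e \<noteq> d + 1 \<Longrightarrow> e \<noteq> d - 1 \<Longrightarrow> hstep s d e = 0"
  unfolding hstep_def by auto

lemma hstep_nonneg: "0 \<le> hstep s d e"
proof (cases "d = 0")
  case False
  then have "1 \<le> \<bar>real_of_int d\<bar>"
    by linarith
  then have "\<bar>s / (4 * real_of_int d)\<bar> \<le> 1/4"
    using s_pos s_less_1 by (auto simp: abs_divide abs_mult divide_simps)
  then have "-1/4 \<le> s / (4 * real_of_int d)" "s / (4 * real_of_int d) \<le> 1/4"
    unfolding abs_le_iff by linarith+
  then show ?thesis
    using hstep_up[OF False] hstep_down[OF False] hstep_eq_0[of e d]
    by (cases "e = d + 1 \<or> e = d - 1") auto
qed (auto simp: hstep_def)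

lemma hstep_up_down: "hstep s d (d + 1) + hstep s d (d - 1) = 1"
  by (cases "d = 0") (auto simp: hstep_up hstep_down hstep_from_0)

lemma wstep_nonneg: "0 \<le> wstep s z w"
  unfolding wstep_def using hstep_nonneg by auto

lemma wstep_neq_0_imp_nbrs: "wstep s z w \<noteq> 0 \<Longrightarrow> w \<in> nbrs z"
proof -
  assume nz: "wstep s z w \<noteq> 0"
  then have "\<bar>fst w - fst z\<bar> = 1" "hstep s (snd z) (snd w) \<noteq> 0"
    unfolding wstep_def by (auto split: if_splits)
  then show ?thesis
    using hstep_eq_0 unfolding nbrs_eq by (cases z; cases w) (auto simp: abs_eq_iff)
qed

lemma finite_wstep_into: "finite {z. g z * wstep s z y \<noteq> 0}"
  by (rule finite_subset[of _ "nbrs y"]) (auto dest: wstep_neq_0_imp_nbrs simp: nbrs_sym)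

lemma Sum_any_wstep: "Sum_any (\<lambda>w. wstep s z w) = 1"
proof -
  have "Sum_any (\<lambda>w. wstep s z w) = (\<Sum>w\<in>nbrs z. wstep s z w)"
    by (rule Sum_any.expand_superset) (auto dest: wstep_neq_0_imp_nbrs)
  also have "\<dots> = hstep s (snd z) (snd z + 1) + hstep s (snd z) (snd z - 1)"
    unfolding nbrs_eq wstep_def by (cases z) auto
  finally show ?thesis
    by (simp add: hstep_up_down)
qed

lemma wstep_support: "wstep s z w \<noteq> 0 \<Longrightarrow> w \<in> linf_ball z 1"
  using wstep_neq_0_imp_nbrs nbrs_in_linf_ball_Suc[of z z 0] by (auto simp: linf_ball_def)

lemma Sum_any_wstep_into:
  "Sum_any (\<lambda>z. g z * wstep s z y) =
     ((g (fst y - 1, snd y - 1) + g (fst y + 1, snd y - 1)) * hstep s (snd y - 1) (snd y)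
    + (g (fst y - 1, snd y + 1) + g (fst y + 1, snd y + 1)) * hstep s (snd y + 1) (snd y)) / 2"
proof -
  have "Sum_any (\<lambda>z. g z * wstep s z y) = (\<Sum>z\<in>nbrs y. g z * wstep s z y)"
    by (rule Sum_any.expand_superset) (auto dest: wstep_neq_0_imp_nbrs simp: nbrs_sym)
  then show ?thesis
    unfolding nbrs_eq wstep_def by (cases y) (simp add: field_simps)
qed

end

text \<open>
  killed_kernel s A k x y is the probability that the walk from x is at y at time k without
  having visited A up to time k; it is killed_prob with L_n replaced by an arbitrary set A.
  first_entrance s A B j x b is the probability that the walk from x, killed on A, visits B
  for the first time at time j, at b.
\<close>

fun killed_kernel :: "real \<Rightarrow> (int \<times> int) set \<Rightarrow> nat \<Rightarrow> int \<times> int \<Rightarrow> int \<times> int \<Rightarrow> real" where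
  "killed_kernel s A 0 x y = (if x = y \<and> x \<notin> A then 1 else 0)"
| "killed_kernel s A (Suc k) x y =
     (if y \<in> A then 0 else Sum_any (\<lambda>z. killed_kernel s A k x z * wstep s z y))"

definition first_entrance ::
    "real \<Rightarrow> (int \<times> int) set \<Rightarrow> (int \<times> int) set \<Rightarrow> nat \<Rightarrow> int \<times> int \<Rightarrow> int \<times> int \<Rightarrow> real" where
  "first_entrance s A B j x b =
     (if b \<in> B then
        (case j of
          0 \<Rightarrow> if x = b then 1 else 0
        | Suc i \<Rightarrow> Sum_any (\<lambda>z. killed_kernel s (A \<union> B) i x z * wstep s z b))
      else 0)"

definition free_occupation :: "real \<Rightarrow> (int \<times> int) set \<Rightarrow> nat \<Rightarrow> int \<times> int \<Rightarrow> real" where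
  "free_occupation s L i b = Sum_any (\<lambda>w. if w \<in> L then killed_kernel s {} i b w else 0)"

lemma Sum_any_kernel_assoc:
  fixes a :: "int \<times> int \<Rightarrow> real" and b :: "int \<times> int \<Rightarrow> int \<times> int \<Rightarrow> real"
  assumes ha: "\<And>z. a z \<noteq> 0 \<Longrightarrow> z \<in> linf_ball x T"
    and hb: "\<And>z v. b z v \<noteq> 0 \<Longrightarrow> v \<in> linf_ball z k"
  shows "Sum_any (\<lambda>v. Sum_any (\<lambda>z. a z * b z v) * c v)
       = Sum_any (\<lambda>z. a z * Sum_any (\<lambda>v. b z v * c v))"
proof -
  have "Sum_any (\<lambda>v. Sum_any (\<lambda>z. a z * b z v) * c v) = Sum_any (\<lambda>v. Sum_any (\<lambda>z. a z * b z v * c v))"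
    by (intro Sum_any.cong Sum_any_left_distrib, rule finite_subset[of _ "linf_ball x T"])
       (auto dest: ha)
  also have "\<dots> = Sum_any (\<lambda>z. Sum_any (\<lambda>v. a z * b z v * c v))"
    by (rule Sum_any.swap[of "linf_ball x (T + k) \<times> linf_ball x T"])
       (auto dest: ha hb intro: linf_ball_trans)
  also have "\<dots> = Sum_any (\<lambda>z. a z * Sum_any (\<lambda>v. b z v * c v))"
  proof (rule Sum_any.cong)
    fix z
    have "finite {v. b z v * c v \<noteq> 0}"
      by (rule finite_subset[of _ "linf_ball z k"]) (auto dest: hb)
    then show "Sum_any (\<lambda>v. a z * b z v * c v) = a z * Sum_any (\<lambda>v. b z v * c v)"
      by (simp add: Sum_any_right_distrib mult.assoc)
  qed
  finally show ?thesis .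
qed

context drift_param
begin

lemma killed_kernel_nonneg: "0 \<le> killed_kernel s A k x y"
  by (induction k arbitrary: y) (auto intro!: Sum_any_nonneg mult_nonneg_nonneg wstep_nonneg)

lemma killed_kernel_support: "killed_kernel s A k x y \<noteq> 0 \<Longrightarrow> y \<in> linf_ball x k"
proof (induction k arbitrary: y)
  case 0
  then show ?case by (auto simp: linf_ball_def split: if_splits)
next
  case (Suc k)
  then have "Sum_any (\<lambda>z. killed_kernel s A k x z * wstep s z y) \<noteq> 0"
    by (auto split: if_splits)
  then obtain z where "killed_kernel s A k x z * wstep s z y \<noteq> 0"
    by (rule Sum_any.not_neutral_obtains_not_neutral)
  then have "z \<in> linf_ball x k" "y \<in> nbrs z"
    using Suc.IH wstep_neq_0_imp_nbrs by auto
  then show ?case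
    by (rule nbrs_in_linf_ball_Suc)
qed

lemma finite_killed_kernel_support: "finite {y. killed_kernel s A k x y \<noteq> 0}"
  by (rule finite_subset[of _ "linf_ball x k"]) (auto dest: killed_kernel_support)

lemma killed_kernel_step_support:
  "Sum_any (\<lambda>z. killed_kernel s A k x z * wstep s z w) \<noteq> 0 \<Longrightarrow> w \<in> linf_ball x (Suc k)"
proof -
  assume "Sum_any (\<lambda>z. killed_kernel s A k x z * wstep s z w) \<noteq> 0"
  then obtain z where "killed_kernel s A k x z * wstep s z w \<noteq> 0"
    by (rule Sum_any.not_neutral_obtains_not_neutral)
  then have "z \<in> linf_ball x k" "w \<in> nbrs z"
    using killed_kernel_support wstep_neq_0_imp_nbrs mult_eq_0_iff by blast+
  then show ?thesis
    by (rule nbrs_in_linf_ball_Suc)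
qed

lemma killed_kernel_killed: "y \<in> A \<Longrightarrow> killed_kernel s A k x y = 0"
  by (cases k) auto

lemma killed_prob_eq_killed_kernel: "killed_prob s n k x y = killed_kernel s (Lset n) k x y"
proof (induction k arbitrary: y)
  case (Suc k)
  have "(\<Sum>z\<in>nbrs y. killed_kernel s (Lset n) k x z * wstep s z y)
      = Sum_any (\<lambda>z. killed_kernel s (Lset n) k x z * wstep s z y)"
    by (rule Sum_any.expand_superset[symmetric]) (auto dest: wstep_neq_0_imp_nbrs simp: nbrs_sym)
  then show ?case
    using Suc by simp
qed simp

lemma killed_kernel_le_free: "killed_kernel s A k x y \<le> killed_kernel s {} k x y"
proof (induction k arbitrary: y)
  case (Suc k)
  have "Sum_any (\<lambda>z. killed_kernel s A k x z * wstep s z y)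
      \<le> Sum_any (\<lambda>z. killed_kernel s {} k x z * wstep s z y)"
    by (rule Sum_any_mono[OF finite_wstep_into finite_wstep_into])
       (intro mult_right_mono Suc wstep_nonneg)
  then show ?case
    using killed_kernel_nonneg[of "{}" "Suc k" x y] by auto
qed simp

lemma killed_kernel_add:
  "killed_kernel s A (T + k) x w = Sum_any (\<lambda>z. killed_kernel s A T x z * killed_kernel s A k z w)"
proof (induction k arbitrary: w)
  case 0
  have "Sum_any (\<lambda>z. killed_kernel s A T x z * killed_kernel s A 0 z w)
      = Sum_any (\<lambda>z. if z = w then killed_kernel s A T x w else 0)"
    by (rule Sum_any.cong) (auto simp: killed_kernel_killed)
  then show ?case by simp
next
  case (Suc k)
  show ?case
  proof (cases "w \<in> A")
    case False
    have "killed_kernel s A (T + Suc k) x w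
        = Sum_any (\<lambda>v. Sum_any (\<lambda>z. killed_kernel s A T x z * killed_kernel s A k z v) * wstep s v w)"
      using False Suc by simp
    also have "\<dots> = Sum_any (\<lambda>z. killed_kernel s A T x z
                     * Sum_any (\<lambda>v. killed_kernel s A k z v * wstep s v w))"
      by (rule Sum_any_kernel_assoc[where x = x and T = T and k = k])
         (auto dest: killed_kernel_support)
    finally show ?thesis
      using False by simp
  qed (simp add: killed_kernel_killed)
qed

lemma first_entrance_nonneg: "0 \<le> first_entrance s A B j x b"
  unfolding first_entrance_def
  by (auto split: nat.splits intro!: Sum_any_nonneg mult_nonneg_nonneg killed_kernel_nonneg wstep_nonneg)

lemma first_entrance_support: "first_entrance s A B j x b \<noteq> 0 \<Longrightarrow> b \<in> linf_ball x j"
proof (cases j)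
  case (Suc i)
  assume "first_entrance s A B j x b \<noteq> 0"
  then have "Sum_any (\<lambda>z. killed_kernel s (A \<union> B) i x z * wstep s z b) \<noteq> 0"
    using Suc by (auto simp: first_entrance_def split: if_splits)
  then show ?thesis
    using Suc by (simp add: killed_kernel_step_support)
qed (auto simp: first_entrance_def linf_ball_def split: if_splits)

lemma finite_first_entrance_support: "finite {b. first_entrance s A B j x b \<noteq> 0}"
  by (rule finite_subset[of _ "linf_ball x j"]) (auto dest: first_entrance_support)

lemma first_entrance_singleton:
  "Sum_any (\<lambda>b. first_entrance s A {y} j z b * h b) = first_entrance s A {y} j z y * h y"
proof -
  have "Sum_any (\<lambda>b. first_entrance s A {y} j z b * h b)
      = Sum_any (\<lambda>b. if b = y then first_entrance s A {y} j z y * h y else 0)"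
    by (rule Sum_any.cong) (auto simp: first_entrance_def)
  then show ?thesis by simp
qed

lemma killed_kernel_first_entrance:
  assumes "A \<inter> B = {}"
  shows "killed_kernel s A k x w = killed_kernel s (A \<union> B) k x w
           + (\<Sum>j\<le>k. Sum_any (\<lambda>b. first_entrance s A B j x b * killed_kernel s A (k - j) b w))"
proof (induction k arbitrary: w)
  case 0
  have "Sum_any (\<lambda>b. first_entrance s A B 0 x b * killed_kernel s A 0 b w)
      = Sum_any (\<lambda>b. if b = x then (if x \<in> B \<and> x = w \<and> x \<notin> A then 1 else 0) else 0)"
    by (rule Sum_any.cong) (auto simp: first_entrance_def)
  then show ?case
    using assms by auto
next
  case (Suc k)
  show ?case
  proof (cases "w \<in> A")
    case False
    let ?kA = "killed_kernel s A" and ?kAB = "killed_kernel s (A \<union> B)"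
    let ?F = "first_entrance s A B"
    let ?S = "\<lambda>z. \<Sum>j\<le>k. Sum_any (\<lambda>b. ?F j x b * ?kA (k - j) b z)"
    have "?kA (Suc k) x w = Sum_any (\<lambda>z. (?kAB k x z + ?S z) * wstep s z w)"
      using False Suc by simp
    also have "\<dots> = Sum_any (\<lambda>z. ?kAB k x z * wstep s z w) + Sum_any (\<lambda>z. ?S z * wstep s z w)"
      unfolding distrib_right by (rule Sum_any.distrib[OF finite_wstep_into finite_wstep_into])
    finally have split: "?kA (Suc k) x w
        = Sum_any (\<lambda>z. ?kAB k x z * wstep s z w) + Sum_any (\<lambda>z. ?S z * wstep s z w)" .
    have last: "Sum_any (\<lambda>z. ?kAB k x z * wstep s z w)
        = ?kAB (Suc k) x w + Sum_any (\<lambda>b. ?F (Suc k) x b * ?kA (Suc k - Suc k) b w)"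
    proof -
      have "Sum_any (\<lambda>b. ?F (Suc k) x b * ?kA 0 b w) = Sum_any (\<lambda>b. if b = w then ?F (Suc k) x w else 0)"
        by (rule Sum_any.cong) (use False in auto)
      then show ?thesis
        using False by (auto simp: first_entrance_def)
    qed
    have "Sum_any (\<lambda>z. ?S z * wstep s z w)
        = (\<Sum>j\<le>k. Sum_any (\<lambda>z. Sum_any (\<lambda>b. ?F j x b * ?kA (k - j) b z) * wstep s z w))"
      unfolding sum_distrib_right by (rule Sum_any_sum[OF finite_atMost finite_wstep_into])
    also have "\<dots> = (\<Sum>j\<le>k. Sum_any (\<lambda>b. ?F j x b * Sum_any (\<lambda>z. ?kA (k - j) b z * wstep s z w)))"
      by (intro sum.cong refl Sum_any_kernel_assoc[where x = x and T = "_" and k = "_"])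
         (auto dest: first_entrance_support killed_kernel_support)
    also have "\<dots> = (\<Sum>j\<le>k. Sum_any (\<lambda>b. ?F j x b * ?kA (Suc k - j) b w))"
      by (intro sum.cong refl) (use False in \<open>auto simp: Suc_diff_le\<close>)
    finally show ?thesis
      using split last by simp
  qed (simp add: killed_kernel_killed)
qed

lemma first_entrance_mass_le:
  "(\<Sum>j\<le>k. Sum_any (first_entrance s A B j x)) + Sum_any (killed_kernel s (A \<union> B) k x) \<le> 1"
proof (induction k)
  case 0
  have "Sum_any (first_entrance s A B 0 x) = Sum_any (\<lambda>b. if b = x then (if x \<in> B then 1 else 0) else 0)"
    by (rule Sum_any.cong) (auto simp: first_entrance_def)
  moreover have "Sum_any (killed_kernel s (A \<union> B) 0 x)
      = Sum_any (\<lambda>b. if b = x then (if x \<notin> A \<union> B then 1 else 0) else 0)"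
    by (rule Sum_any.cong) auto
  ultimately show ?case by auto
next
  case (Suc k)
  let ?kAB = "killed_kernel s (A \<union> B)"
  let ?F = "\<lambda>w. Sum_any (\<lambda>z. ?kAB k x z * wstep s z w)"
  have pointwise: "first_entrance s A B (Suc k) x w + ?kAB (Suc k) x w \<le> ?F w" for w
  proof -
    have "0 \<le> ?F w"
      by (intro Sum_any_nonneg mult_nonneg_nonneg killed_kernel_nonneg wstep_nonneg)
    then show ?thesis
      by (simp add: first_entrance_def)
  qed
  have "Sum_any (first_entrance s A B (Suc k) x) + Sum_any (?kAB (Suc k) x)
      = Sum_any (\<lambda>w. first_entrance s A B (Suc k) x w + ?kAB (Suc k) x w)"
    by (rule Sum_any.distrib[symmetric, OF finite_first_entrance_support finite_killed_kernel_support])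
  also have "\<dots> \<le> Sum_any ?F"
  proof (rule Sum_any_mono[OF _ _ pointwise])
    have "first_entrance s A B (Suc k) x w \<noteq> 0 \<or> ?kAB (Suc k) x w \<noteq> 0"
      if "first_entrance s A B (Suc k) x w + ?kAB (Suc k) x w \<noteq> 0" for w
      using that by (metis add.right_neutral)
    then show "finite {w. first_entrance s A B (Suc k) x w + ?kAB (Suc k) x w \<noteq> 0}"
      by (intro finite_subset[of _ "linf_ball x (Suc k)", OF subsetI finite_linf_ball])
         (use first_entrance_support killed_kernel_support in blast)
    show "finite {w. ?F w \<noteq> 0}"
      using killed_kernel_step_support
      by (intro finite_subset[of _ "linf_ball x (Suc k)", OF subsetI finite_linf_ball]) simp
  qed
  also have "\<dots> = Sum_any (\<lambda>w. Sum_any (\<lambda>z. ?kAB k x z * wstep s z w) * 1)"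
    by simp
  also have "\<dots> = Sum_any (\<lambda>z. ?kAB k x z * Sum_any (\<lambda>w. wstep s z w * 1))"
    by (rule Sum_any_kernel_assoc[where x = x and T = k and k = 1])
       (auto dest: killed_kernel_support wstep_support)
  also have "\<dots> = Sum_any (?kAB k x)"
    using Sum_any_wstep by simp
  finally show ?case
    using Suc by simp
qed

lemma killed_green_le_diagonal:
  assumes "y \<notin> A"
  shows "(\<Sum>k<N. killed_kernel s A k z y) \<le> (\<Sum>k<N. killed_kernel s A k y y)"
proof -
  let ?f = "\<lambda>j. first_entrance s A {y} j z y"
  let ?g = "\<lambda>i. killed_kernel s A i y y"
  have decomp: "killed_kernel s A k z y = (\<Sum>j\<le>k. ?f j * ?g (k - j))" for k
    using killed_kernel_first_entrance[of A "{y}" k z y] assms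
    by (simp add: killed_kernel_killed first_entrance_singleton)
  have first_entrance_le_1: "(\<Sum>j<N. ?f j) \<le> 1"
  proof (cases N)
    case (Suc k)
    have "Sum_any (first_entrance s A {y} j z) = ?f j" for j
      using first_entrance_singleton[of A y j z "\<lambda>_. 1"] by simp
    then show ?thesis
      using first_entrance_mass_le[where k = k and A = A and B = "{y}" and x = z] Suc
        Sum_any_nonneg[of "killed_kernel s (A \<union> {y}) k z"] killed_kernel_nonneg
      by (simp add: lessThan_Suc_atMost)
  qed simp
  have "(\<Sum>k<N. killed_kernel s A k z y) = (\<Sum>k<N. \<Sum>j\<le>k. ?f j * ?g (k - j))"
    by (simp add: decomp)
  also have "\<dots> \<le> (\<Sum>j<N. ?f j) * (\<Sum>i<N. ?g i)"
    by (rule sum_convolution_le_product) (auto intro: first_entrance_nonneg killed_kernel_nonneg)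
  also have "\<dots> \<le> (\<Sum>i<N. ?g i)"
    using mult_right_mono[OF first_entrance_le_1, of "\<Sum>i<N. ?g i"]
    by (simp add: sum_nonneg killed_kernel_nonneg)
  finally show ?thesis .
qed

end

fun srw_kernel :: "nat \<Rightarrow> int \<Rightarrow> real" where
  "srw_kernel 0 d = (if d = 0 then 1 else 0)"
| "srw_kernel (Suc k) d = (srw_kernel k (d - 1) + srw_kernel k (d + 1)) / 2"

fun height_kernel :: "real \<Rightarrow> nat \<Rightarrow> int \<Rightarrow> real" where
  "height_kernel s 0 d = (if d = 0 then 1 else 0)"
| "height_kernel s (Suc k) d =
     height_kernel s k (d - 1) * hstep s (d - 1) d + height_kernel s k (d + 1) * hstep s (d + 1) d"

definition srw_expect :: "nat \<Rightarrow> (int \<Rightarrow> real) \<Rightarrow> real" where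
  "srw_expect k g = Sum_any (\<lambda>d. srw_kernel k d * g d)"

definition height_expect :: "real \<Rightarrow> nat \<Rightarrow> (int \<Rightarrow> real) \<Rightarrow> real" where
  "height_expect s k g = Sum_any (\<lambda>d. height_kernel s k d * g d)"

lemma Sum_any_nearest_neighbour_step:
  fixes K K' u v g :: "int \<Rightarrow> real"
  assumes K': "\<And>d. K' d = K (d - 1) * u (d - 1) + K (d + 1) * v (d + 1)"
    and fin: "finite {d. K d \<noteq> 0}"
  shows "Sum_any (\<lambda>d. K' d * g d) = Sum_any (\<lambda>d. K d * (u d * g (d + 1) + v d * g (d - 1)))"
proof -
  have fin_up: "finite {d. K (d - 1) * u (d - 1) * g d \<noteq> 0}"
    using finite_nonzero_shift_int[of "\<lambda>e. K e * u e * g (e + 1)" "-1"]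
    by (simp add: finite_subset[OF _ fin])
  have fin_down: "finite {d. K (d + 1) * v (d + 1) * g d \<noteq> 0}"
    using finite_nonzero_shift_int[of "\<lambda>e. K e * v e * g (e - 1)" 1]
    by (simp add: finite_subset[OF _ fin])
  have "Sum_any (\<lambda>d. K' d * g d)
      = Sum_any (\<lambda>d. K (d - 1) * u (d - 1) * g d) + Sum_any (\<lambda>d. K (d + 1) * v (d + 1) * g d)"
    unfolding K' distrib_right by (rule Sum_any.distrib[OF fin_up fin_down])
  also have "\<dots> = Sum_any (\<lambda>d. K d * u d * g (d + 1)) + Sum_any (\<lambda>d. K d * v d * g (d - 1))"
    using Sum_any_shift_int[of "\<lambda>d. K (d - 1) * u (d - 1) * g d" 1]
      Sum_any_shift_int[of "\<lambda>d. K (d + 1) * v (d + 1) * g d" "-1"] by simp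
  also have "\<dots> = Sum_any (\<lambda>d. K d * u d * g (d + 1) + K d * v d * g (d - 1))"
    by (rule Sum_any.distrib[symmetric]) (auto intro: finite_subset[OF _ fin])
  finally show ?thesis
    by (simp add: algebra_simps)
qed

lemma nearest_neighbour_support:
  fixes K :: "nat \<Rightarrow> int \<Rightarrow> 'a::zero"
  assumes "\<And>d. K 0 d \<noteq> 0 \<Longrightarrow> d = 0"
    and "\<And>k d. K (Suc k) d \<noteq> 0 \<Longrightarrow> K k (d - 1) \<noteq> 0 \<or> K k (d + 1) \<noteq> 0"
  shows "K k d \<noteq> 0 \<Longrightarrow> \<bar>d\<bar> \<le> int k \<and> even (int k + d)"
proof (induction k arbitrary: d)
  case (Suc k)
  then have "\<bar>d - 1\<bar> \<le> int k \<and> even (int k + (d - 1)) \<or> \<bar>d + 1\<bar> \<le> int k \<and> even (int k + (d + 1))"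
    using assms(2) by blast
  then show ?case
    by auto
qed (use assms(1) in fastforce)

lemma srw_kernel_support: "srw_kernel k d \<noteq> 0 \<Longrightarrow> \<bar>d\<bar> \<le> int k \<and> even (int k + d)"
  by (rule nearest_neighbour_support[of srw_kernel]) (auto split: if_splits)

lemma finite_srw_kernel_support: "finite {d. srw_kernel k d \<noteq> 0}"
  by (rule finite_subset[of _ "{-int k..int k}"]) (auto dest!: srw_kernel_support)

lemma srw_kernel_nonneg: "0 \<le> srw_kernel k d"
  by (induction k arbitrary: d) auto

lemma srw_expect_Suc: "srw_expect (Suc k) g = srw_expect k (\<lambda>d. (g (d + 1) + g (d - 1)) / 2)"
  unfolding srw_expect_def
  by (subst Sum_any_nearest_neighbour_step[where K = "srw_kernel k" and u = "\<lambda>_. 1/2" and v = "\<lambda>_. 1/2"])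
     (auto simp: finite_srw_kernel_support field_simps)

lemma srw_expect_mono: "(\<And>d. g d \<le> g' d) \<Longrightarrow> srw_expect k g \<le> srw_expect k g'"
  unfolding srw_expect_def
  by (rule Sum_any_mono)
     (auto intro!: mult_left_mono srw_kernel_nonneg intro: finite_subset[OF _ finite_srw_kernel_support])

lemma srw_expect_add: "srw_expect k (\<lambda>d. g d + g' d) = srw_expect k g + srw_expect k g'"
  unfolding srw_expect_def distrib_left
  by (rule Sum_any.distrib) (auto intro: finite_subset[OF _ finite_srw_kernel_support])

lemma srw_expect_cmult: "srw_expect k (\<lambda>d. c * g d) = c * srw_expect k g"
  unfolding srw_expect_def
  by (subst Sum_any_right_distrib) (auto intro: finite_subset[OF _ finite_srw_kernel_support] simp: algebra_simps)

lemma srw_expect_0: "srw_expect 0 g = g 0"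
proof -
  have "Sum_any (\<lambda>d. srw_kernel 0 d * g d) = Sum_any (\<lambda>d::int. if d = 0 then g 0 else 0)"
    by (rule Sum_any.cong) auto
  then show ?thesis by (simp add: srw_expect_def)
qed

lemma srw_expect_const: "srw_expect k (\<lambda>d. c) = c"
  by (induction k) (simp_all add: srw_expect_0 srw_expect_Suc)

lemma srw_expect_sq: "srw_expect k (\<lambda>d. (real_of_int d)\<^sup>2) = real k"
proof (induction k)
  case (Suc k)
  have "srw_expect (Suc k) (\<lambda>d. (real_of_int d)\<^sup>2) = srw_expect k (\<lambda>d. (real_of_int d)\<^sup>2 + 1)"
    unfolding srw_expect_Suc by (rule arg_cong[where f = "srw_expect k"]) (auto simp: power2_eq_square algebra_simps)
  then show ?case
    using Suc by (simp add: srw_expect_add srw_expect_const)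
qed (simp add: srw_expect_0)

lemma srw_expect_fourth_le: "srw_expect k (\<lambda>d. (real_of_int d) ^ 4) \<le> 3 * (real k)\<^sup>2"
proof (induction k)
  case (Suc k)
  have "srw_expect (Suc k) (\<lambda>d. (real_of_int d) ^ 4)
      = srw_expect k (\<lambda>d. (real_of_int d) ^ 4 + (6 * (real_of_int d)\<^sup>2 + 1))"
    unfolding srw_expect_Suc
    by (rule arg_cong[where f = "srw_expect k"]) (auto simp: power2_eq_square power4_eq_xxxx algebra_simps)
  also have "\<dots> = srw_expect k (\<lambda>d. (real_of_int d) ^ 4) + 6 * real k + 1"
    by (simp add: srw_expect_add srw_expect_cmult srw_expect_const srw_expect_sq)
  also have "\<dots> \<le> 3 * (real (Suc k))\<^sup>2"
    using Suc by (simp add: power2_eq_square algebra_simps)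
  finally show ?case .
qed (simp add: srw_expect_0)

lemma srw_large_displacement:
  assumes "k \<ge> 1"
  shows "1/12 \<le> srw_expect k (\<lambda>d. if real k / 2 \<le> (real_of_int d)\<^sup>2 then 1 else 0)"
proof -
  let ?big = "\<lambda>d. if real k / 2 \<le> (real_of_int d)\<^sup>2 then 1 else 0 :: real"
  let ?P = "srw_expect k ?big"
  have k_pos: "real k > 0"
    using assms by simp
  \<comment> \<open>Paley-Zygmund: with E d^2 = k and E d^4 \<le> 3 k^2, integrating this bound gives P (d^2 \<ge> k/2) \<ge> 1/12.\<close>
  have pointwise: "(real_of_int d)\<^sup>2 \<le> real k / 2 + ((1 / (12 * real k)) * (real_of_int d) ^ 4 + (3 * real k) * ?big d)"
    for d
  proof (cases "real k / 2 \<le> (real_of_int d)\<^sup>2")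
    case True
    have "0 \<le> ((real_of_int d)\<^sup>2 - 6 * real k)\<^sup>2"
      by simp
    then have "12 * real k * (real_of_int d)\<^sup>2 \<le> (real_of_int d) ^ 4 + 36 * (real k)\<^sup>2"
      by (simp add: power2_eq_square power4_eq_xxxx algebra_simps)
    then have "(real_of_int d)\<^sup>2 \<le> (real_of_int d) ^ 4 / (12 * real k) + 3 * real k"
      using k_pos by (simp add: field_simps power2_eq_square)
    then show ?thesis
      using True k_pos by simp
  next
    case False
    then have "?big d = 0" "(real_of_int d)\<^sup>2 \<le> real k / 2"
      by auto
    moreover have "0 \<le> 1 / (12 * real k) * (real_of_int d) ^ 4"
      using k_pos by simp
    ultimately show ?thesis
      by (simp only: mult_zero_right add_0_right)
  qed
  have "real k = srw_expect k (\<lambda>d. (real_of_int d)\<^sup>2)"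
    by (simp add: srw_expect_sq)
  also have "\<dots> \<le> srw_expect k (\<lambda>d. real k / 2 + ((1 / (12 * real k)) * (real_of_int d) ^ 4 + (3 * real k) * ?big d))"
    by (rule srw_expect_mono) (rule pointwise)
  also have "\<dots> = real k / 2 + (1 / (12 * real k)) * srw_expect k (\<lambda>d. (real_of_int d) ^ 4) + 3 * real k * ?P"
    by (simp only: srw_expect_add srw_expect_cmult srw_expect_const add.assoc)
  also have "\<dots> \<le> real k / 2 + (1 / (12 * real k)) * (3 * (real k)\<^sup>2) + 3 * real k * ?P"
    using srw_expect_fourth_le[of k] k_pos by (intro add_mono mult_left_mono) auto
  finally have "real k \<le> real k / 2 + real k / 4 + 3 * real k * ?P"
    using k_pos by (simp add: power2_eq_square)
  then show ?thesis
    using k_pos by (simp add: field_simps)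
qed

lemma srw_kernel_binomial: "srw_kernel k (2 * int i - int k) = real (k choose i) / 2 ^ k"
proof (induction k arbitrary: i)
  case 0
  then show ?case by (cases i) auto
next
  case (Suc k)
  show ?case
  proof (cases i)
    case 0
    have "srw_kernel k (- int k - 2) = 0"
      using srw_kernel_support[of k "- int k - 2"] by fastforce
    then show ?thesis
      using Suc.IH[of 0] 0 by (simp add: algebra_simps)
  next
    case (Suc i')
    have "srw_kernel (Suc k) (2 * int i - int (Suc k))
        = (srw_kernel k (2 * int i' - int k) + srw_kernel k (2 * int (Suc i') - int k)) / 2"
      using Suc by (simp add: algebra_simps)
    then show ?thesis
      using Suc Suc.IH[of i'] Suc.IH[of "Suc i'"] by (simp add: field_simps)
  qed
qed

lemma central_binomial_Suc:
  "real ((2 * Suc j) choose Suc j) * (real j + 1) = real ((2 * j) choose j) * (4 * real j + 2)"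
proof -
  define X Y where "X = (2 * Suc j) choose Suc j" and "Y = (2 * j) choose j"
  have "Suc (Suc (2 * j)) * (Suc (2 * j) choose j) = X * Suc j"
    unfolding X_def using Suc_times_binomial_eq[of "Suc (2 * j)" j] by simp
  moreover have "Suc (2 * j) choose Suc j = Suc (2 * j) choose j"
    using binomial_symmetric[of "Suc j" "Suc (2 * j)"] by simp
  moreover have "Suc (2 * j) * Y = (Suc (2 * j) choose Suc j) * Suc j"
    unfolding Y_def by (rule Suc_times_binomial_eq)
  ultimately have "X * Suc j * Suc j = Suc (Suc (2 * j)) * (Suc (2 * j) * Y)"
    by (metis mult.assoc mult.commute)
  then have "real (X * Suc j * Suc j) = real (Suc (Suc (2 * j)) * (Suc (2 * j) * Y))"
    by (rule arg_cong)
  then have "(real X * (real j + 1)) * (real j + 1) = (real Y * (4 * real j + 2)) * (real j + 1)"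
    by (simp only: of_nat_mult of_nat_Suc of_nat_add) (simp add: algebra_simps)
  then show ?thesis
    unfolding X_def Y_def by (rule mult_right_cancel[THEN iffD1, rotated]) simp
qed

lemma central_binomial_sq_le: "(real ((2 * j) choose j) / 4 ^ j)\<^sup>2 * (3 * real j + 1) \<le> 1"
proof (induction j)
  case (Suc j)
  let ?a = "real ((2 * j) choose j) / 4 ^ j"
  have ratio: "real ((2 * Suc j) choose Suc j) / 4 ^ Suc j = ?a * (2 * real j + 1) / (2 * real j + 2)"
  proof -
    define X Y where "X = real ((2 * Suc j) choose Suc j)" and "Y = real ((2 * j) choose j)"
    have "X * (real j + 1) = Y * (4 * real j + 2)"
      unfolding X_def Y_def by (rule central_binomial_Suc)
    then have "X = Y * (2 * real j + 1) * 4 / (2 * real j + 2)"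
      by (simp add: field_simps)
    then show ?thesis
      unfolding X_def[symmetric] Y_def[symmetric] by simp
  qed
  have "(2 * real j + 1)\<^sup>2 * (3 * real j + 4) \<le> (2 * real j + 2)\<^sup>2 * (3 * real j + 1)"
    by (simp add: power2_eq_square algebra_simps)
  then have "?a\<^sup>2 * ((2 * real j + 1)\<^sup>2 * (3 * real j + 4)) / (2 * real j + 2)\<^sup>2
      \<le> ?a\<^sup>2 * ((2 * real j + 2)\<^sup>2 * (3 * real j + 1)) / (2 * real j + 2)\<^sup>2"
    by (intro divide_right_mono mult_left_mono) auto
  also have "\<dots> = ?a\<^sup>2 * (3 * real j + 1)"
    by simp
  finally have step: "(?a * (2 * real j + 1) / (2 * real j + 2))\<^sup>2 * (3 * real j + 4) \<le> ?a\<^sup>2 * (3 * real j + 1)"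
    by (simp add: power_divide power_mult_distrib mult_ac)
  have "3 * real (Suc j) + 1 = 3 * real j + 4"
    by simp
  then show ?case
    unfolding ratio using order_trans[OF step Suc] by (simp add: add.commute)
qed simp

lemma srw_kernel_diagonal_le: "k \<ge> 1 \<Longrightarrow> srw_kernel k 0 \<le> 1 / sqrt (real k)"
proof (cases "even k")
  case True
  assume k: "k \<ge> 1"
  then obtain j where j: "k = 2 * j"
    using True by auto
  have diag: "srw_kernel k 0 = real ((2 * j) choose j) / 4 ^ j"
    using srw_kernel_binomial[of k j] j by (simp add: power_mult)
  have "(srw_kernel k 0)\<^sup>2 * real k \<le> (srw_kernel k 0)\<^sup>2 * (3 * real j + 1)"
    using j by (intro mult_left_mono) auto
  also have "\<dots> \<le> 1"
    using central_binomial_sq_le[of j] diag by simp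
  finally have "(srw_kernel k 0 * sqrt (real k))\<^sup>2 \<le> 1"
    by (simp add: power_mult_distrib)
  then have "srw_kernel k 0 * sqrt (real k) \<le> 1"
    using srw_kernel_nonneg[of k 0] by (simp add: power_le_one_iff abs_le_iff)
  then show ?thesis
    using k by (simp add: field_simps)
next
  case False
  then have "srw_kernel k 0 = 0"
    using srw_kernel_support[of k 0] by auto
  then show ?thesis
    by simp
qed

context drift_param
begin

lemma height_kernel_support: "height_kernel s k d \<noteq> 0 \<Longrightarrow> \<bar>d\<bar> \<le> int k \<and> even (int k + d)"
  by (rule nearest_neighbour_support[of "height_kernel s"]) (auto split: if_splits)

lemma finite_height_kernel_support: "finite {d. height_kernel s k d \<noteq> 0}"
  by (rule finite_subset[of _ "{-int k..int k}"]) (auto dest!: height_kernel_support)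

lemma height_kernel_nonneg: "0 \<le> height_kernel s k d"
  by (induction k arbitrary: d) (auto intro!: add_nonneg_nonneg mult_nonneg_nonneg hstep_nonneg)

lemma height_expect_Suc:
  "height_expect s (Suc k) g
     = height_expect s k (\<lambda>d. hstep s d (d + 1) * g (d + 1) + hstep s d (d - 1) * g (d - 1))"
  unfolding height_expect_def
  by (subst Sum_any_nearest_neighbour_step[where K = "height_kernel s k"
        and u = "\<lambda>d. hstep s d (d + 1)" and v = "\<lambda>d. hstep s d (d - 1)"])
     (auto simp: finite_height_kernel_support)

lemma height_expect_mono: "(\<And>d. g d \<le> g' d) \<Longrightarrow> height_expect s k g \<le> height_expect s k g'"
  unfolding height_expect_def
  by (rule Sum_any_mono)
     (auto intro!: mult_left_mono height_kernel_nonneg intro: finite_subset[OF _ finite_height_kernel_support])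

lemma height_expect_add: "height_expect s k (\<lambda>d. g d + g' d) = height_expect s k g + height_expect s k g'"
  unfolding height_expect_def distrib_left
  by (rule Sum_any.distrib) (auto intro: finite_subset[OF _ finite_height_kernel_support])

lemma height_expect_cmult: "height_expect s k (\<lambda>d. c * g d) = c * height_expect s k g"
  unfolding height_expect_def
  by (subst Sum_any_right_distrib)
     (auto intro: finite_subset[OF _ finite_height_kernel_support] simp: algebra_simps)

lemma height_expect_const: "height_expect s k (\<lambda>d. c) = c"
proof (induction k)
  case 0
  have "Sum_any (\<lambda>d. height_kernel s 0 d * c) = Sum_any (\<lambda>d::int. if d = 0 then c else 0)"
    by (rule Sum_any.cong) auto
  then show ?case by (simp add: height_expect_def)
next
  case (Suc k)
  then show ?case
    by (simp add: height_expect_Suc distrib_right[symmetric] hstep_up_down)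
qed

lemma height_expect_indicator_0: "height_expect s k (\<lambda>d. if d = 0 then 1 else 0) = height_kernel s k 0"
proof -
  have "Sum_any (\<lambda>d. height_kernel s k d * (if d = 0 then 1 else 0))
      = Sum_any (\<lambda>d::int. if d = 0 then height_kernel s k 0 else 0)"
    by (rule Sum_any.cong) auto
  then show ?thesis by (simp add: height_expect_def)
qed

lemma height_expect_0: "height_expect s 0 g = g 0"
proof -
  have "Sum_any (\<lambda>d. height_kernel s 0 d * g d) = Sum_any (\<lambda>d::int. if d = 0 then g 0 else 0)"
    by (rule Sum_any.cong) auto
  then show ?thesis by (simp add: height_expect_def)
qed

lemma height_second_moment_step:
  "hstep s d (d + 1) * (real_of_int (d + 1))\<^sup>2 + hstep s d (d - 1) * (real_of_int (d - 1))\<^sup>2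
     = (real_of_int d)\<^sup>2 + (if d = 0 then 1 else 1 - s)"
proof (cases "d = 0")
  case False
  then show ?thesis
    unfolding hstep_up[OF False] hstep_down[OF False] by (simp add: field_simps power2_eq_square)
qed (simp add: hstep_from_0)

lemma height_fourth_moment_step:
  "hstep s d (d + 1) * (real_of_int (d + 1)) ^ 4 + hstep s d (d - 1) * (real_of_int (d - 1)) ^ 4
     \<le> (real_of_int d) ^ 4 + 6 * (real_of_int d)\<^sup>2 + 1"
proof (cases "d = 0")
  case False
  then have "hstep s d (d + 1) * (real_of_int (d + 1)) ^ 4 + hstep s d (d - 1) * (real_of_int (d - 1)) ^ 4
      = (real_of_int d) ^ 4 + 6 * (real_of_int d)\<^sup>2 + 1 - 2 * s * (real_of_int d)\<^sup>2 - 2 * s"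
    unfolding hstep_up[OF False] hstep_down[OF False]
    by (simp add: field_simps power2_eq_square power4_eq_xxxx)
  moreover have "0 \<le> 2 * s * (real_of_int d)\<^sup>2 + 2 * s"
    using s_pos by simp
  ultimately show ?thesis
    by linarith
qed (simp add: hstep_from_0)

lemma height_second_moment_bounds:
  "(1 - s) * real k \<le> height_expect s k (\<lambda>d. (real_of_int d)\<^sup>2)"
  "height_expect s k (\<lambda>d. (real_of_int d)\<^sup>2) \<le> real k"
proof (induction k)
  case (Suc k)
  have step: "height_expect s (Suc k) (\<lambda>d. (real_of_int d)\<^sup>2)
      = height_expect s k (\<lambda>d. (real_of_int d)\<^sup>2) + height_expect s k (\<lambda>d. if d = 0 then 1 else 1 - s)"
    unfolding height_expect_Suc by (simp only: height_second_moment_step height_expect_add)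
  have "height_expect s k (\<lambda>d. 1 - s) \<le> height_expect s k (\<lambda>d. if d = 0 then 1 else 1 - s)"
    "height_expect s k (\<lambda>d. if d = 0 then 1 else 1 - s) \<le> height_expect s k (\<lambda>d. 1)"
    by (rule height_expect_mono; use s_pos in simp)+
  then show "(1 - s) * real (Suc k) \<le> height_expect s (Suc k) (\<lambda>d. (real_of_int d)\<^sup>2)"
    "height_expect s (Suc k) (\<lambda>d. (real_of_int d)\<^sup>2) \<le> real (Suc k)"
    using Suc step by (simp_all add: height_expect_const algebra_simps)
qed (simp_all add: height_expect_0)

lemma height_fourth_moment_le: "height_expect s k (\<lambda>d. (real_of_int d) ^ 4) \<le> 3 * (real k)\<^sup>2"
proof (induction k)
  case (Suc k)
  have "height_expect s (Suc k) (\<lambda>d. (real_of_int d) ^ 4)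
      \<le> height_expect s k (\<lambda>d. (real_of_int d) ^ 4 + (6 * (real_of_int d)\<^sup>2 + 1))"
    unfolding height_expect_Suc
    by (rule height_expect_mono) (use height_fourth_moment_step in \<open>simp add: add.assoc\<close>)
  also have "\<dots> = height_expect s k (\<lambda>d. (real_of_int d) ^ 4) + 6 * height_expect s k (\<lambda>d. (real_of_int d)\<^sup>2) + 1"
    by (simp add: height_expect_add height_expect_cmult height_expect_const)
  also have "\<dots> \<le> 3 * (real (Suc k))\<^sup>2"
    using Suc height_second_moment_bounds(2)[of k] by (simp add: power2_eq_square algebra_simps)
  finally show ?case .
qed (simp add: height_expect_0)

lemma free_killed_kernel_factor:
  "snd x = 0 \<Longrightarrow> killed_kernel s {} k x y = srw_kernel k (fst y - fst x) * height_kernel s k (snd y)"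
proof (induction k arbitrary: y)
  case 0
  then show ?case by (cases x; cases y) auto
next
  case (Suc k)
  obtain a b where y: "y = (a, b)"
    by (cases y)
  have "killed_kernel s {} (Suc k) x y = Sum_any (\<lambda>z. killed_kernel s {} k x z * wstep s z y)"
    by simp
  also have "\<dots> = (srw_kernel k (a - 1 - fst x) + srw_kernel k (a + 1 - fst x)) / 2
      * (height_kernel s k (b - 1) * hstep s (b - 1) b + height_kernel s k (b + 1) * hstep s (b + 1) b)"
    unfolding Sum_any_wstep_into using Suc by (simp add: y field_simps)
  also have "\<dots> = srw_kernel (Suc k) (fst y - fst x) * height_kernel s (Suc k) (snd y)"
    by (simp add: y algebra_simps)
  finally show ?case .
qed

definition scale_increment :: "nat \<Rightarrow> real" where
  "scale_increment i = (\<Prod>j\<in>{1..i}. (2 * real j + s) / (2 * real j - s))"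

definition scale :: "nat \<Rightarrow> real" where
  "scale r = (\<Sum>i<r. scale_increment i)"

lemma scale_increment_0 [simp]: "scale_increment 0 = 1"
  by (simp add: scale_increment_def)

lemma scale_increment_Suc:
  "scale_increment (Suc i) = scale_increment i * ((2 * real (Suc i) + s) / (2 * real (Suc i) - s))"
  unfolding scale_increment_def by (simp add: prod.nat_ivl_Suc')

lemma scale_increment_pos: "0 < scale_increment i"
  unfolding scale_increment_def using s_pos s_less_1 by (intro prod_pos) (auto intro!: divide_pos_pos)

lemma scale_nonneg: "0 \<le> scale r"
  unfolding scale_def by (simp add: sum_nonneg less_imp_le scale_increment_pos)

lemma scale_harmonic:
  assumes "r \<ge> 1"
  shows "(1/2 - s / (4 * real r)) * scale (r + 1) + (1/2 + s / (4 * real r)) * scale (r - 1) = scale r"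
proof -
  obtain m where m: "r = Suc m"
    using assms by (cases r) auto
  have up: "scale (r + 1) = scale r + scale_increment r" and down: "scale (r - 1) = scale r - scale_increment m"
    by (simp_all add: scale_def m)
  have "(1/2 - s / (4 * real r)) * scale_increment r = (1/2 + s / (4 * real r)) * scale_increment m"
    using scale_increment_Suc[of m] m assms s_less_1 by (simp add: field_simps)
  moreover have "(1/2 - s / (4 * real r)) * (scale r + scale_increment r) + (1/2 + s / (4 * real r)) * (scale r - scale_increment m)
     = scale r + ((1/2 - s / (4 * real r)) * scale_increment r - (1/2 + s / (4 * real r)) * scale_increment m)"
    by (simp add: ring_distribs)
  ultimately show ?thesis
    unfolding up down by simp
qed

text \<open>
  scale (|h|) is harmonic for the height chain away from 0 and grows by 1 in expectation at 0,
  so its expectation after k steps counts the visits of the height to 0 before time k.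
\<close>

lemma scale_step:
  "hstep s d (d + 1) * scale (nat \<bar>d + 1\<bar>) + hstep s d (d - 1) * scale (nat \<bar>d - 1\<bar>)
     = scale (nat \<bar>d\<bar>) + (if d = 0 then 1 else 0)"
proof (cases "d = 0")
  case True
  then show ?thesis by (simp add: hstep_from_0 scale_def)
next
  case False
  show ?thesis
  proof (cases "d > 0")
    case True
    have "nat \<bar>d + 1\<bar> = nat d + 1" "nat \<bar>d - 1\<bar> = nat d - 1" "nat \<bar>d\<bar> = nat d"
      "real_of_int d = real (nat d)"
      using True by auto
    then show ?thesis
      unfolding hstep_up[OF False] hstep_down[OF False] using scale_harmonic[of "nat d"] True False by simp
  next
    case nonpos: False
    have "nat \<bar>d + 1\<bar> = nat (-d) - 1" "nat \<bar>d - 1\<bar> = nat (-d) + 1" "nat \<bar>d\<bar> = nat (-d)"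
      "real_of_int d = - real (nat (-d))"
      using nonpos False by auto
    moreover have "1 \<le> nat (-d)"
      using nonpos False by simp
    from scale_harmonic[OF this] show ?thesis
      unfolding hstep_up[OF False] hstep_down[OF False] calculation using False by (simp add: algebra_simps)
  qed
qed

definition height_visits_0 :: "nat \<Rightarrow> real" where
  "height_visits_0 k = (\<Sum>j<k. height_kernel s j 0)"

lemma height_visits_0_eq_expect_scale: "height_visits_0 k = height_expect s k (\<lambda>d. scale (nat \<bar>d\<bar>))"
proof (induction k)
  case (Suc k)
  have "height_expect s (Suc k) (\<lambda>d. scale (nat \<bar>d\<bar>))
      = height_expect s k (\<lambda>d. scale (nat \<bar>d\<bar>) + (if d = 0 then 1 else 0))"
    unfolding height_expect_Suc by (simp only: scale_step)
  then show ?case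
    using Suc by (simp add: height_expect_add height_expect_indicator_0 height_visits_0_def)
qed (simp add: height_expect_0 height_visits_0_def scale_def)

lemma increment_ratio_le:
  assumes b: "b > 0"
  shows "(2 * b + 1 + 2 * s) / (2 * b + 1) \<le> ((b + 1) / b) powr s"
proof -
  have "1 + 1 / b > 0"
    using b by (simp add: add_pos_pos)
  then have "1 + s * ln (1 + 1 / b) \<le> ((b + 1) / b) powr s"
    using b exp_ge_add_one_self[of "s * ln (1 + 1 / b)"]
    by (simp add: powr_def add_divide_distrib)
  moreover have "s * (2 / (2 * b + 1)) \<le> s * ln (1 + 1 / b)"
    using ln_add_one_ge[of "1 / b"] b s_pos by (intro mult_left_mono) (auto simp: field_simps)
  moreover have "(2 * b + 1 + 2 * s) / (2 * b + 1) = 1 + s * (2 / (2 * b + 1))"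
    using b by (simp add: field_simps)
  ultimately show ?thesis
    by linarith
qed

lemma scale_increment_le_shifted: "scale_increment i \<le> ((real i + (1 - s) / 2) / ((1 - s) / 2)) powr s"
proof (induction i)
  case 0
  then show ?case using s_less_1 by simp
next
  case (Suc i)
  let ?a = "(1 - s) / 2"
  let ?b = "real i + ?a"
  have b_pos: "?b > 0"
    using s_less_1 by (simp add: add_nonneg_pos)
  have "2 * ?b + 1 = 2 * real (Suc i) - s" "2 * ?b + 1 + 2 * s = 2 * real (Suc i) + s"
    by (simp_all add: field_simps)
  with increment_ratio_le[OF b_pos]
  have ratio: "(2 * real (Suc i) + s) / (2 * real (Suc i) - s) \<le> ((?b + 1) / ?b) powr s"
    by (simp only:)
  have "scale_increment (Suc i) \<le> (?b / ?a) powr s * ((?b + 1) / ?b) powr s"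
    unfolding scale_increment_Suc using s_pos s_less_1 scale_increment_pos[of i]
    by (intro mult_mono[OF Suc ratio]) auto
  also have "\<dots> = (?b / ?a * ((?b + 1) / ?b)) powr s"
    by (rule powr_mult[symmetric])
  also have "?b / ?a * ((?b + 1) / ?b) = (?b + 1) / ?a"
    using b_pos times_divide_times_eq[of ?b ?a "?b + 1" ?b] by simp
  also have "?b + 1 = real (Suc i) + ?a"
    by simp
  finally show ?case .
qed

definition scale_upper_const :: real where
  "scale_upper_const = 2 / (1 - s)"

lemma scale_upper_const_ge_1: "1 \<le> scale_upper_const"
  using s_pos s_less_1 by (simp add: scale_upper_const_def field_simps)

lemma scale_increment_le: "scale_increment i \<le> scale_upper_const * (real i + 1) powr s"
proof -
  let ?a = "(1 - s) / 2"
  have a: "?a > 0" "?a \<le> 1"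
    using s_pos s_less_1 by auto
  have "scale_increment i \<le> ((real i + ?a) / ?a) powr s"
    by (rule scale_increment_le_shifted)
  also have "\<dots> \<le> ((real i + 1) * (1 / ?a)) powr s"
    using a s_pos by (intro powr_mono2) (auto simp: divide_right_mono)
  also have "\<dots> = (real i + 1) powr s * (1 / ?a) powr s"
    by (rule powr_mult)
  also have "(1 / ?a) powr s \<le> (1 / ?a) powr 1"
    using a s_less_1 by (intro powr_mono) (auto simp: field_simps)
  finally show ?thesis
    using a by (simp add: scale_upper_const_def mult.commute mult_left_mono)
qed

lemma scale_increment_ge: "(real i + 1) powr s \<le> scale_increment i"
proof (induction i)
  case (Suc i)
  let ?j = "real i + 1"
  have j_pos: "?j > 0"
    by simp
  \<comment> \<open>Young's inequality bounds the concave power ((j + 1) / j) powr s by its tangent line.\<close>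
  have "((?j + 1) / ?j) powr s * 1 powr (1 - s) \<le> s * ((?j + 1) / ?j) + (1 - s) * 1"
    using s_pos s_less_1 j_pos by (intro Youngs_inequality_0) auto
  also have "\<dots> = 1 + s / ?j"
    using j_pos by (simp add: field_simps)
  also have "\<dots> \<le> (2 * real (Suc i) + s) / (2 * real (Suc i) - s)"
    using s_pos s_less_1 by (simp add: field_simps)
  finally have ratio: "((?j + 1) / ?j) powr s \<le> (2 * real (Suc i) + s) / (2 * real (Suc i) - s)"
    by simp
  have "(real (Suc i) + 1) powr s = ?j powr s * ((?j + 1) / ?j) powr s"
    using j_pos by (simp add: powr_divide add.commute)
  also have "\<dots> \<le> scale_increment (Suc i)"
    unfolding scale_increment_Suc using scale_increment_pos[of i]
    by (intro mult_mono[OF Suc ratio]) auto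
  finally show ?case .
qed simp

lemma scale_le: "scale r \<le> scale_upper_const * real r powr (1 + s)"
proof -
  have "scale r \<le> (\<Sum>i<r. scale_upper_const * real r powr s)"
    unfolding scale_def
  proof (rule sum_mono)
    fix i
    assume "i \<in> {..<r}"
    then have "(real i + 1) powr s \<le> real r powr s"
      using s_pos by (intro powr_mono2) auto
    then show "scale_increment i \<le> scale_upper_const * real r powr s"
      using scale_increment_le[of i] scale_upper_const_ge_1 by (smt (verit) mult_left_mono)
  qed
  also have "\<dots> = scale_upper_const * real r powr (1 + s)"
    by (cases "r = 0") (auto simp: powr_add)
  finally show ?thesis .
qed

lemma scale_ge:
  assumes A: "A > 0" "real r \<le> A"
  shows "A powr (s - 1) * (real r)\<^sup>2 / 2 \<le> scale r"
proof -
  have "(\<Sum>i<r. A powr (s - 1) * (real i + 1)) \<le> scale r"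
    unfolding scale_def
  proof (rule sum_mono)
    fix i
    assume "i \<in> {..<r}"
    then have "A powr (s - 1) \<le> (real i + 1) powr (s - 1)"
      using A s_less_1 by (intro powr_mono2') auto
    then have "A powr (s - 1) * (real i + 1) \<le> (real i + 1) powr (s - 1) * (real i + 1)"
      by (intro mult_right_mono) auto
    also have "\<dots> = (real i + 1) powr s"
      using powr_add[of "real i + 1" "s - 1" 1] by simp
    finally show "A powr (s - 1) * (real i + 1) \<le> scale_increment i"
      using scale_increment_ge[of i] by linarith
  qed
  moreover have "(\<Sum>i<r. real i + 1) = real r * (real r + 1) / 2"
    by (induction r) (auto simp: field_simps)
  then have "(\<Sum>i<r. A powr (s - 1) * (real i + 1)) = A powr (s - 1) * (real r * (real r + 1) / 2)"
    by (simp add: sum_distrib_left[symmetric])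
  moreover have "A powr (s - 1) * ((real r)\<^sup>2 / 2) \<le> A powr (s - 1) * (real r * (real r + 1) / 2)"
    by (intro mult_left_mono) (auto simp: power2_eq_square field_simps)
  ultimately show ?thesis
    by simp
qed

lemma height_visits_0_nonneg: "0 \<le> height_visits_0 k"
  unfolding height_visits_0_def by (intro sum_nonneg height_kernel_nonneg)

lemma height_visits_0_diff:
  "k \<le> k' \<Longrightarrow> height_visits_0 k' - height_visits_0 k = (\<Sum>j\<in>{k..<k'}. height_kernel s j 0)"
  unfolding height_visits_0_def lessThan_atLeast0
  by (simp add: sum.atLeastLessThan_concat[symmetric, of 0 k k'])

lemma powr_split_le:
  assumes A: "A > 0"
  shows "\<bar>x\<bar> powr (1 + s) \<le> A powr (1 + s) + A powr (s - 1) * x\<^sup>2"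
proof (cases "\<bar>x\<bar> \<le> A")
  case True
  then have "\<bar>x\<bar> powr (1 + s) \<le> A powr (1 + s)"
    using s_pos by (intro powr_mono2) auto
  then show ?thesis
    by (simp add: add_increasing2)
next
  case False
  have "\<bar>x\<bar> powr (1 + s) = \<bar>x\<bar> powr ((s - 1) + 2)"
    by simp
  also have "\<dots> = \<bar>x\<bar> powr (s - 1) * \<bar>x\<bar> powr 2"
    by (rule powr_add)
  also have "\<dots> = \<bar>x\<bar> powr (s - 1) * x\<^sup>2"
    using False A by simp
  also have "\<dots> \<le> A powr (s - 1) * x\<^sup>2"
    using False A s_less_1 by (intro mult_right_mono powr_mono2') auto
  finally show ?thesis
    by (simp add: add_increasing)
qed

lemma height_visits_0_le:
  "height_visits_0 k \<le> 2 * scale_upper_const * real k powr ((1 + s) / 2)"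
proof (cases "k = 0")
  case True
  then show ?thesis by (simp add: height_visits_0_def)
next
  case False
  then have k_pos: "real k > 0"
    by simp
  define A where "A = sqrt (real k)"
  have A_pos: "A > 0"
    using k_pos by (simp add: A_def)
  let ?B = scale_upper_const
  \<comment> \<open>Split the growth of the scale function at |d| = sqrt k, the typical height after k steps.\<close>
  have pointwise: "scale (nat \<bar>d\<bar>) \<le> ?B * A powr (1 + s) + (?B * A powr (s - 1)) * (real_of_int d)\<^sup>2" for d
  proof -
    have "scale (nat \<bar>d\<bar>) \<le> ?B * \<bar>real_of_int d\<bar> powr (1 + s)"
      using scale_le[of "nat \<bar>d\<bar>"] by simp
    also have "\<dots> \<le> ?B * (A powr (1 + s) + A powr (s - 1) * (real_of_int d)\<^sup>2)"
      using scale_upper_const_ge_1 by (intro mult_left_mono powr_split_le A_pos) auto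
    finally show ?thesis
      by (simp add: algebra_simps)
  qed
  have "height_visits_0 k \<le> height_expect s k (\<lambda>d. ?B * A powr (1 + s) + (?B * A powr (s - 1)) * (real_of_int d)\<^sup>2)"
    unfolding height_visits_0_eq_expect_scale by (rule height_expect_mono) (rule pointwise)
  also have "\<dots> = ?B * A powr (1 + s) + ?B * A powr (s - 1) * height_expect s k (\<lambda>d. (real_of_int d)\<^sup>2)"
    by (simp only: height_expect_add height_expect_cmult height_expect_const)
  also have "\<dots> \<le> ?B * A powr (1 + s) + ?B * (A powr (s - 1) * real k)"
    using height_second_moment_bounds(2)[of k] scale_upper_const_ge_1
    by (simp add: mult.assoc mult_left_mono)
  also have "A powr (1 + s) = real k powr ((1 + s) / 2)"
    unfolding A_def using k_pos by (simp add: powr_half_sqrt[symmetric] powr_powr)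
  also have "A powr (s - 1) * real k = real k powr ((s - 1) / 2 + 1)"
    unfolding A_def using k_pos by (simp add: powr_half_sqrt[symmetric] powr_powr powr_add)
  finally show ?thesis
    by (simp add: add_divide_distrib diff_divide_distrib)
qed

definition visits_lower_const :: real where
  "visits_lower_const = (1 - s) / 4 * (6 / (1 - s)) powr ((s - 1) / 2)"

lemma visits_lower_const_pos: "visits_lower_const > 0"
  using s_less_1 by (simp add: visits_lower_const_def)

lemma scale_ge_quadratic_minus_quartic:
  assumes A_pos: "A > 0"
  shows "A powr (s - 1) / 2 * (real_of_int d)\<^sup>2 - A powr (s - 1) / 2 / A\<^sup>2 * (real_of_int d) ^ 4
           \<le> scale (nat \<bar>d\<bar>)"
proof (cases "\<bar>real_of_int d\<bar> \<le> A")
  case True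
  then have "A powr (s - 1) / 2 * (real_of_int d)\<^sup>2 \<le> scale (nat \<bar>d\<bar>)"
    using scale_ge[OF A_pos, of "nat \<bar>d\<bar>"] by simp
  moreover have "0 \<le> A powr (s - 1) / 2 / A\<^sup>2 * (real_of_int d) ^ 4"
    using A_pos by simp
  ultimately show ?thesis
    by linarith
next
  case False
  then have "A\<^sup>2 * (real_of_int d)\<^sup>2 \<le> (real_of_int d)\<^sup>2 * (real_of_int d)\<^sup>2"
    using A_pos by (intro mult_right_mono) (auto simp: abs_le_square_iff[symmetric])
  then have "(real_of_int d)\<^sup>2 \<le> (real_of_int d) ^ 4 / A\<^sup>2"
    using A_pos by (simp add: field_simps power4_eq_xxxx power2_eq_square)
  then have "A powr (s - 1) / 2 * (real_of_int d)\<^sup>2 \<le> A powr (s - 1) / 2 * ((real_of_int d) ^ 4 / A\<^sup>2)"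
    by (intro mult_left_mono) auto
  then show ?thesis
    using scale_nonneg[of "nat \<bar>d\<bar>"] by simp
qed

lemma height_visits_0_ge:
  assumes "k \<ge> 1"
  shows "visits_lower_const * real k powr ((1 + s) / 2) \<le> height_visits_0 k"
proof -
  have k_pos: "real k > 0"
    using assms by simp
  define A where "A = sqrt (6 * real k / (1 - s))"
  have A_pos: "A > 0" and A_sq: "A\<^sup>2 = 6 * real k / (1 - s)"
    unfolding A_def using k_pos s_less_1 by auto
  let ?c = "A powr (s - 1) / 2"
  have "?c * ((1 - s) * real k) - ?c / A\<^sup>2 * (3 * (real k)\<^sup>2)
      \<le> ?c * height_expect s k (\<lambda>d. (real_of_int d)\<^sup>2) - ?c / A\<^sup>2 * height_expect s k (\<lambda>d. (real_of_int d) ^ 4)"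
    using height_second_moment_bounds(1)[of k] height_fourth_moment_le[of k] A_pos
    by (intro diff_mono mult_left_mono) auto
  also have "\<dots> = height_expect s k (\<lambda>d. ?c * (real_of_int d)\<^sup>2 + (- ?c / A\<^sup>2) * (real_of_int d) ^ 4)"
    by (simp only: height_expect_add height_expect_cmult)
  also have "\<dots> \<le> height_visits_0 k"
    unfolding height_visits_0_eq_expect_scale
    by (rule height_expect_mono) (use scale_ge_quadratic_minus_quartic[OF A_pos] in simp)
  finally have "?c * ((1 - s) * real k) - ?c / A\<^sup>2 * (3 * (real k)\<^sup>2) \<le> height_visits_0 k" .
  moreover have "?c * ((1 - s) * real k) - ?c / A\<^sup>2 * (3 * (real k)\<^sup>2) = A powr (s - 1) * (1 - s) * real k / 4"
    unfolding A_sq using k_pos s_less_1 by (simp add: field_simps power2_eq_square)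
  moreover have "A powr (s - 1) * (1 - s) * real k / 4 = visits_lower_const * real k powr ((1 + s) / 2)"
  proof -
    define P Q where "P = (6 / (1 - s)) powr ((s - 1) / 2)" and "Q = real k powr ((s - 1) / 2)"
    have A_powr: "A powr (s - 1) = P * Q"
      unfolding A_def P_def Q_def using k_pos s_less_1
      by (simp add: powr_half_sqrt[symmetric] powr_powr powr_mult[symmetric] mult.commute)
    have "Q * real k = real k powr ((s - 1) / 2 + 1)"
      unfolding Q_def using k_pos by (simp add: powr_add)
    also have "(s - 1) / 2 + 1 = (1 + s) / 2"
      by (simp add: field_simps)
    finally have Q_k: "Q * real k = real k powr ((1 + s) / 2)" .
    have "visits_lower_const = (1 - s) / 4 * P"
      unfolding visits_lower_const_def P_def ..
    moreover have "A powr (s - 1) * (1 - s) * real k / 4 = (1 - s) / 4 * P * (Q * real k)"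
      unfolding A_powr by (simp add: field_simps)
    ultimately show ?thesis
      unfolding Q_k by (simp only:)
  qed
  ultimately show ?thesis
    by simp
qed

lemma finite_free_occupation_support: "finite {w. (if w \<in> L then killed_kernel s {} i b w else 0) \<noteq> 0}"
  by (rule finite_subset[OF _ finite_killed_kernel_support[of "{}" i b]]) auto

lemma free_occupation_nonneg: "0 \<le> free_occupation s L i b"
  unfolding free_occupation_def by (rule Sum_any_nonneg) (simp add: killed_kernel_nonneg)

lemma free_occupation_Lset_le:
  assumes "snd b = 0"
  shows "free_occupation s (Lset n) i b \<le> height_kernel s i 0"
proof -
  let ?h = "\<lambda>w::int \<times> int. if snd w = 0 then srw_kernel i (fst w - fst b) * height_kernel s i 0 else 0"
  have fin_h: "finite {u. srw_kernel i (u - fst b) * height_kernel s i 0 \<noteq> 0}"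
    by (rule finite_subset[OF _ finite_nonzero_shift_int[OF finite_srw_kernel_support[of i], of "- fst b"]])
       auto
  have "free_occupation s (Lset n) i b \<le> Sum_any ?h"
    unfolding free_occupation_def
  proof (rule Sum_any_mono[OF finite_free_occupation_support])
    have "w \<in> linf_ball b i" if "?h w \<noteq> 0" for w
    proof -
      have "snd w = 0" "srw_kernel i (fst w - fst b) \<noteq> 0"
        using that by (auto split: if_splits)
      then show ?thesis
        using srw_kernel_support[of i "fst w - fst b"] assms
        by (cases w) (auto simp: linf_ball_def abs_le_iff)
    qed
    then show "finite {w. ?h w \<noteq> 0}"
      by (intro finite_subset[of _ "linf_ball b i", OF subsetI finite_linf_ball]) simp
    show "(if w \<in> Lset n then killed_kernel s {} i b w else 0) \<le> ?h w" for w
      using free_killed_kernel_factor[OF assms, of i w]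
      by (auto simp: Lset_def intro!: mult_nonneg_nonneg srw_kernel_nonneg height_kernel_nonneg)
  qed
  also have "Sum_any ?h = Sum_any (\<lambda>u. srw_kernel i (u - fst b) * height_kernel s i 0)"
    by (rule Sum_any_on_axis[OF fin_h])
  also have "\<dots> = Sum_any (\<lambda>d. srw_kernel i d * height_kernel s i 0)"
    using Sum_any_shift_int[of "\<lambda>u. srw_kernel i (u - fst b) * height_kernel s i 0" "fst b"] by simp
  also have "\<dots> = height_kernel s i 0"
    using srw_expect_const[of i "height_kernel s i 0"] by (simp add: srw_expect_def)
  finally show ?thesis .
qed

lemma free_occupation_Lset_eq:
  "free_occupation s (Lset n) k (a, 0) = Sum_any (\<lambda>d.
     if even (d + a) \<and> 2 * (int n + 1) \<le> \<bar>d + a\<bar> then srw_kernel k d * height_kernel s k 0 else 0)"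
  (is "_ = Sum_any (\<lambda>d. if ?in_L (d + a) then _ else _)")
proof -
  have "free_occupation s (Lset n) k (a, 0)
      = Sum_any (\<lambda>w::int \<times> int. if snd w = 0 then
          (if ?in_L (fst w) then srw_kernel k (fst w - a) * height_kernel s k 0 else 0) else 0)"
    unfolding free_occupation_def by (rule Sum_any.cong) (auto simp: Lset_def free_killed_kernel_factor)
  also have "\<dots> = Sum_any (\<lambda>u. if ?in_L u then srw_kernel k (u - a) * height_kernel s k 0 else 0)"
    by (rule Sum_any_on_axis)
       (rule finite_subset[OF _ finite_nonzero_shift_int[OF finite_srw_kernel_support[of k], of "- a"]], auto)
  also have "\<dots> = Sum_any (\<lambda>d. if ?in_L (d + a) then srw_kernel k d * height_kernel s k 0 else 0)"
    using Sum_any_shift_int[of "\<lambda>u. if ?in_L u then srw_kernel k (u - a) * height_kernel s k 0 else 0" a, symmetric]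
    by (simp only: add_diff_cancel_right')
  finally show ?thesis .
qed

lemma large_displacement_leaves_box:
  fixes a d :: int
  assumes a: "even a" "\<bar>a\<bar> \<le> 2 * int n" and k: "2 * (4 * n + 2)\<^sup>2 \<le> k"
    and d: "even d" "real k / 2 \<le> (real_of_int d)\<^sup>2"
  shows "even (d + a) \<and> 2 * (int n + 1) \<le> \<bar>d + a\<bar>"
proof -
  have "real (2 * (4 * n + 2)\<^sup>2) \<le> real k"
    using k by (rule of_nat_mono)
  then have "(real (4 * n + 2))\<^sup>2 \<le> (real_of_int d)\<^sup>2"
    using d by simp
  then have "int (4 * n + 2) \<le> \<bar>d\<bar>"
    using abs_le_square_iff[of "real (4 * n + 2)" "real_of_int d"] by linarith
  then show ?thesis
    using a d by auto
qed

lemma free_occupation_Lset_ge: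
  assumes a: "even a" "\<bar>a\<bar> \<le> 2 * int n" and k: "2 * (4 * n + 2)\<^sup>2 \<le> k"
  shows "height_kernel s k 0 / 12 \<le> free_occupation s (Lset n) k (a, 0)"
proof (cases "even k")
  case False
  then have "height_kernel s k 0 = 0"
    using height_kernel_support[of k 0] by auto
  then show ?thesis
    by (simp add: free_occupation_nonneg)
next
  case True
  let ?in_L = "\<lambda>u::int. even u \<and> 2 * (int n + 1) \<le> \<bar>u\<bar>"
  let ?big = "\<lambda>d. if real k / 2 \<le> (real_of_int d)\<^sup>2 then 1 else 0 :: real"
  have k1: "k \<ge> 1"
    using k by (simp add: le_trans[OF _ k])
  have pointwise: "srw_kernel k d * ?big d * height_kernel s k 0
      \<le> (if ?in_L (d + a) then srw_kernel k d * height_kernel s k 0 else 0)" for d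
  proof (cases "srw_kernel k d \<noteq> 0 \<and> real k / 2 \<le> (real_of_int d)\<^sup>2")
    case nonzero: True
    then have "even d"
      using srw_kernel_support[of k d] True by simp
    then show ?thesis
      using large_displacement_leaves_box[OF a k, of d] nonzero by simp
  qed (use srw_kernel_nonneg[of k d] height_kernel_nonneg[of k 0] in auto)
  have fin_big: "finite {d. srw_kernel k d * ?big d * height_kernel s k 0 \<noteq> 0}"
    by (rule finite_subset[OF _ finite_srw_kernel_support[of k]]) auto
  have fin_L: "finite {d. (if ?in_L (d + a) then srw_kernel k d * height_kernel s k 0 else 0) \<noteq> 0}"
    by (rule finite_subset[OF _ finite_srw_kernel_support[of k]]) auto
  have "height_kernel s k 0 / 12 \<le> srw_expect k ?big * height_kernel s k 0"
    using mult_right_mono[OF srw_large_displacement[OF k1] height_kernel_nonneg[of k 0]] by simp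
  also have "\<dots> = Sum_any (\<lambda>d. srw_kernel k d * ?big d * height_kernel s k 0)"
    unfolding srw_expect_def
    by (rule Sum_any_left_distrib) (rule finite_subset[OF _ finite_srw_kernel_support[of k]], auto)
  also have "\<dots> \<le> free_occupation s (Lset n) k (a, 0)"
    unfolding free_occupation_Lset_eq by (rule Sum_any_mono[OF fin_big fin_L pointwise])
  finally show ?thesis .
qed

lemma free_occupation_first_entrance:
  "free_occupation s L k x
     = (\<Sum>j\<le>k. Sum_any (\<lambda>b. first_entrance s {} L j x b * free_occupation s L (k - j) b))"
proof -
  let ?G = "\<lambda>j b w. first_entrance s {} L j x b * (if w \<in> L then killed_kernel s {} (k - j) b w else 0)"
  have G_support: "w \<in> linf_ball x k \<and> b \<in> linf_ball x j" if "?G j b w \<noteq> 0" "j \<le> k" for j b w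
  proof -
    have "first_entrance s {} L j x b \<noteq> 0" "killed_kernel s {} (k - j) b w \<noteq> 0"
      using that(1) by (auto split: if_splits)
    then have "b \<in> linf_ball x j" "w \<in> linf_ball b (k - j)"
      by (auto dest: first_entrance_support killed_kernel_support)
    then show ?thesis
      using linf_ball_trans[of b x j w "k - j"] that(2) by auto
  qed
  have "free_occupation s L k x = Sum_any (\<lambda>w. \<Sum>j\<le>k. Sum_any (\<lambda>b. ?G j b w))"
    unfolding free_occupation_def
  proof (rule Sum_any.cong)
    fix w
    show "(if w \<in> L then killed_kernel s {} k x w else 0) = (\<Sum>j\<le>k. Sum_any (\<lambda>b. ?G j b w))"
      using killed_kernel_first_entrance[of "{}" L k x w]
      by (cases "w \<in> L") (simp_all add: killed_kernel_killed)
  qed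
  also have "\<dots> = (\<Sum>j\<le>k. Sum_any (\<lambda>w. Sum_any (\<lambda>b. ?G j b w)))"
  proof (rule Sum_any_sum)
    fix j
    assume j: "j \<in> {..k}"
    have "w \<in> linf_ball x k" if nonzero: "Sum_any (\<lambda>b. ?G j b w) \<noteq> 0" for w
    proof -
      obtain b where "?G j b w \<noteq> 0"
        using nonzero by (rule Sum_any.not_neutral_obtains_not_neutral)
      then show ?thesis
        using G_support j by auto
    qed
    then show "finite {w. Sum_any (\<lambda>b. ?G j b w) \<noteq> 0}"
      by (intro finite_subset[of _ "linf_ball x k", OF subsetI finite_linf_ball]) simp
  qed simp
  also have "\<dots> = (\<Sum>j\<le>k. Sum_any (\<lambda>b. Sum_any (\<lambda>w. ?G j b w)))"
  proof (rule sum.cong[OF refl])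
    fix j
    assume "j \<in> {..k}"
    then show "Sum_any (\<lambda>w. Sum_any (\<lambda>b. ?G j b w)) = Sum_any (\<lambda>b. Sum_any (\<lambda>w. ?G j b w))"
      by (intro Sum_any_swap_support[of "linf_ball x k" "linf_ball x j"]) (use G_support in auto)
  qed
  also have "\<dots> = (\<Sum>j\<le>k. Sum_any (\<lambda>b. first_entrance s {} L j x b * free_occupation s L (k - j) b))"
    unfolding free_occupation_def
    by (intro sum.cong refl Sum_any.cong Sum_any_right_distrib[symmetric] finite_free_occupation_support)
  finally show ?thesis .
qed

lemma expected_occupation_le_hitting:
  assumes "snd x = 0"
  shows "(\<Sum>k<N. free_occupation s (Lset n) k x)
           \<le> (\<Sum>j<N. Sum_any (first_entrance s {} (Lset n) j x)) * height_visits_0 N"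
proof -
  let ?F = "\<lambda>j. Sum_any (first_entrance s {} (Lset n) j x)"
  have "Sum_any (\<lambda>b. first_entrance s {} (Lset n) j x b * free_occupation s (Lset n) i b)
      \<le> ?F j * height_kernel s i 0" for j i
  proof -
    have "Sum_any (\<lambda>b. first_entrance s {} (Lset n) j x b * free_occupation s (Lset n) i b)
        \<le> Sum_any (\<lambda>b. first_entrance s {} (Lset n) j x b * height_kernel s i 0)"
    proof (rule Sum_any_mono)
      show "finite {b. first_entrance s {} (Lset n) j x b * free_occupation s (Lset n) i b \<noteq> 0}"
        "finite {b. first_entrance s {} (Lset n) j x b * height_kernel s i 0 \<noteq> 0}"
        by (rule finite_subset[OF _ finite_first_entrance_support[of "{}" "Lset n" j x]]; auto)+
      fix b
      show "first_entrance s {} (Lset n) j x b * free_occupation s (Lset n) i b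
          \<le> first_entrance s {} (Lset n) j x b * height_kernel s i 0"
      proof (cases "b \<in> Lset n")
        case True
        then have "free_occupation s (Lset n) i b \<le> height_kernel s i 0"
          by (intro free_occupation_Lset_le) (simp add: Lset_def)
        then show ?thesis
          by (rule mult_left_mono) (rule first_entrance_nonneg)
      qed (simp add: first_entrance_def)
    qed
    also have "\<dots> = ?F j * height_kernel s i 0"
      by (rule Sum_any_left_distrib[symmetric]) (rule finite_first_entrance_support)
    finally show ?thesis .
  qed
  then have "(\<Sum>k<N. free_occupation s (Lset n) k x) \<le> (\<Sum>k<N. \<Sum>j\<le>k. ?F j * height_kernel s (k - j) 0)"
    unfolding free_occupation_first_entrance[of _ _ x] by (intro sum_mono) auto
  also have "\<dots> \<le> (\<Sum>j<N. ?F j) * height_visits_0 N"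
    unfolding height_visits_0_def
    by (rule sum_convolution_le_product) (auto intro: Sum_any_nonneg first_entrance_nonneg height_kernel_nonneg)
  finally show ?thesis .
qed

text \<open>
  The expected number of visits of the free walk to L_n, counted from below (after m steps the
  walk is spread horizontally far beyond Lambda_n) and from above (it has to enter L_n first, and
  from a point of L_n its expected number of visits to the axis is height_visits_0).
\<close>
lemma survival_visits_tradeoff:
  assumes a: "even a" "\<bar>a\<bar> \<le> 2 * int n" and T: "2 * (4 * n + 2)\<^sup>2 \<le> T"
  shows "(height_visits_0 (Suc T) - height_visits_0 (2 * (4 * n + 2)\<^sup>2)) / 12
           \<le> (1 - Sum_any (killed_kernel s (Lset n) T (a, 0))) * height_visits_0 (Suc T)"
proof -
  let ?m = "2 * (4 * n + 2)\<^sup>2" and ?x = "(a, 0::int)"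
  let ?F = "\<lambda>j. Sum_any (first_entrance s {} (Lset n) j ?x)"
  have "(height_visits_0 (Suc T) - height_visits_0 ?m) / 12 = (\<Sum>j\<in>{?m..<Suc T}. height_kernel s j 0 / 12)"
    using T by (simp only: height_visits_0_diff le_SucI sum_divide_distrib)
  also have "\<dots> \<le> (\<Sum>j\<in>{?m..<Suc T}. free_occupation s (Lset n) j ?x)"
    by (rule sum_mono) (rule free_occupation_Lset_ge[OF a], auto)
  also have "\<dots> \<le> (\<Sum>k<Suc T. free_occupation s (Lset n) k ?x)"
    by (rule sum_mono2) (auto intro: free_occupation_nonneg)
  also have "\<dots> \<le> (\<Sum>j<Suc T. ?F j) * height_visits_0 (Suc T)"
    by (rule expected_occupation_le_hitting) simp
  also have "\<dots> \<le> (1 - Sum_any (killed_kernel s (Lset n) T ?x)) * height_visits_0 (Suc T)"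
    using first_entrance_mass_le[where k = T and A = "{}" and B = "Lset n" and x = ?x]
    by (intro mult_right_mono height_visits_0_nonneg) (simp add: lessThan_Suc_atMost)
  finally show ?thesis .
qed

text \<open>Chosen so that height_visits_0 m \<le> height_visits_0 T / 2 whenever 1 \<le> m and mixing_const * m \<le> T.\<close>

definition mixing_const :: nat where
  "mixing_const = nat \<lceil>(4 * scale_upper_const / visits_lower_const)\<^sup>2\<rceil> + 1"

lemma mixing_const_ge_1: "1 \<le> mixing_const"
  by (simp add: mixing_const_def)

lemma sqrt_mixing_const_ge: "4 * scale_upper_const / visits_lower_const \<le> real mixing_const powr (1/2)"
proof -
  have "(4 * scale_upper_const / visits_lower_const)\<^sup>2 \<le> real mixing_const"
    unfolding mixing_const_def by linarith
  then have "sqrt ((4 * scale_upper_const / visits_lower_const)\<^sup>2) \<le> sqrt (real mixing_const)"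
    by (rule real_sqrt_le_mono)
  then show ?thesis
    using scale_upper_const_ge_1 visits_lower_const_pos by (simp add: powr_half_sqrt)
qed

lemma survival_le:
  assumes a: "even a" "\<bar>a\<bar> \<le> 2 * int n" and T: "mixing_const * (2 * (4 * n + 2)\<^sup>2) \<le> T"
  shows "Sum_any (killed_kernel s (Lset n) T (a, 0)) \<le> 23/24"
proof -
  let ?m = "2 * (4 * n + 2)\<^sup>2" and ?e = "(1 + s) / 2"
  let ?S = "Sum_any (killed_kernel s (Lset n) T (a, 0))"
  have "?m \<le> T"
    using T mixing_const_ge_1 by (metis le_trans mult_le_mono1 mult_1)
  then have tradeoff: "(height_visits_0 (Suc T) - height_visits_0 ?m) / 12 \<le> (1 - ?S) * height_visits_0 (Suc T)"
    using survival_visits_tradeoff[OF a] by simp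
  have lower: "visits_lower_const * real (Suc T) powr ?e \<le> height_visits_0 (Suc T)"
    by (rule height_visits_0_ge) simp
  then have pos: "height_visits_0 (Suc T) > 0"
    using visits_lower_const_pos by (smt (verit) mult_pos_pos powr_gt_zero of_nat_0_less_iff zero_less_Suc)
  have "real mixing_const powr (1/2) * real ?m powr ?e \<le> real mixing_const powr ?e * real ?m powr ?e"
    using mixing_const_ge_1 s_pos by (intro mult_right_mono powr_mono) auto
  also have "\<dots> = (real mixing_const * real ?m) powr ?e"
    by (rule powr_mult[symmetric])
  also have "\<dots> \<le> real (Suc T) powr ?e"
    using T s_pos by (intro powr_mono2) (auto simp flip: of_nat_mult)
  finally have "4 * scale_upper_const / visits_lower_const * real ?m powr ?e \<le> real (Suc T) powr ?e"
    using sqrt_mixing_const_ge by (smt (verit) mult_right_mono powr_ge_zero)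
  then have "4 * scale_upper_const * real ?m powr ?e \<le> visits_lower_const * real (Suc T) powr ?e"
    using visits_lower_const_pos by (simp add: field_simps)
  then have "height_visits_0 ?m \<le> height_visits_0 (Suc T) / 2"
    using height_visits_0_le[of ?m] lower by linarith
  then have "height_visits_0 (Suc T) / 24 \<le> (height_visits_0 (Suc T) - height_visits_0 ?m) / 12"
    by (simp add: field_simps)
  then have "height_visits_0 (Suc T) / 24 \<le> (1 - ?S) * height_visits_0 (Suc T)"
    using tradeoff by (rule order_trans)
  then show ?thesis
    using pos by (simp add: field_simps)
qed

lemma killed_green_diagonal_renewal:
  assumes y: "y \<notin> A" and survival: "Sum_any (killed_kernel s A T y) \<le> 23/24"
  shows "(\<Sum>k<N. killed_kernel s A k y y) \<le> 24 * (\<Sum>k<T. killed_kernel s A k y y)"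
proof -
  define G where "G M = (\<Sum>k<M. killed_kernel s A k y y)" for M
  have G_nonneg: "0 \<le> G M" for M
    unfolding G_def by (auto intro: sum_nonneg killed_kernel_nonneg)
  \<comment> \<open>After time T the walk survives with probability at most 23/24, and from wherever it is
    it accumulates no more visits to y than from y itself.\<close>
  have "(\<Sum>k<N. killed_kernel s A (T + k) y y)
      = Sum_any (\<lambda>z. \<Sum>k<N. killed_kernel s A T y z * killed_kernel s A k z y)"
    unfolding killed_kernel_add
    by (rule Sum_any_sum[symmetric]) (auto intro: finite_subset[OF _ finite_killed_kernel_support[of A T y]])
  also have "\<dots> \<le> Sum_any (\<lambda>z. killed_kernel s A T y z * G N)"
  proof (rule Sum_any_mono)
    show "finite {z. (\<Sum>k<N. killed_kernel s A T y z * killed_kernel s A k z y) \<noteq> 0}"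
      by (rule finite_subset[OF _ finite_killed_kernel_support[of A T y]]) (auto simp: sum_distrib_left[symmetric])
    show "finite {z. killed_kernel s A T y z * G N \<noteq> 0}"
      by (rule finite_subset[OF _ finite_killed_kernel_support[of A T y]]) auto
    show "(\<Sum>k<N. killed_kernel s A T y z * killed_kernel s A k z y) \<le> killed_kernel s A T y z * G N" for z
      unfolding G_def sum_distrib_left[symmetric]
      by (rule mult_left_mono[OF killed_green_le_diagonal[OF y] killed_kernel_nonneg])
  qed
  also have "\<dots> = Sum_any (killed_kernel s A T y) * G N"
    by (rule Sum_any_left_distrib[symmetric]) (rule finite_killed_kernel_support)
  also have "\<dots> \<le> 23/24 * G N"
    by (rule mult_right_mono[OF survival G_nonneg])
  finally have tail: "(\<Sum>k<N. killed_kernel s A (T + k) y y) \<le> 23/24 * G N" .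
  have "G N \<le> G (T + N)"
    unfolding G_def by (rule sum_mono2) (auto intro: killed_kernel_nonneg)
  also have "\<dots> = G T + (\<Sum>k<N. killed_kernel s A (T + k) y y)"
    unfolding G_def by (induction N) auto
  finally show ?thesis
    using tail by (simp add: G_def)
qed

definition diagonal_const :: real where
  "diagonal_const = max 1 (2 * scale_upper_const * 2 powr ((1 + s) / 2) / (2 powr (s / 2) - 1))"

lemma diagonal_const_ge_1: "1 \<le> diagonal_const"
  by (simp add: diagonal_const_def)

lemma diagonal_const_ge: "2 * scale_upper_const * 2 powr ((1 + s) / 2) \<le> diagonal_const * (2 powr (s / 2) - 1)"
proof -
  have "2 powr (s / 2) - 1 > 0"
    using s_pos by simp
  moreover have "2 * scale_upper_const * 2 powr ((1 + s) / 2) / (2 powr (s / 2) - 1) \<le> diagonal_const"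
    by (simp add: diagonal_const_def)
  ultimately show ?thesis
    by (simp add: field_simps)
qed

lemma dyadic_block_le:
  "(\<Sum>k\<in>{2 ^ I..<2 ^ Suc I}. srw_kernel k 0 * height_kernel s k 0)
     \<le> 2 * scale_upper_const * 2 powr ((1 + s) / 2) * (2 ^ I) powr (s / 2)"
proof -
  define X :: real where "X = 2 ^ I"
  have X: "X \<ge> 1"
    by (simp add: X_def)
  have "(\<Sum>k\<in>{2 ^ I..<2 ^ Suc I}. srw_kernel k 0 * height_kernel s k 0)
      \<le> (\<Sum>k\<in>{2 ^ I..<2 ^ Suc I}. X powr (-1/2) * height_kernel s k 0)"
  proof (rule sum_mono)
    fix k :: nat
    assume k: "k \<in> {2 ^ I..<2 ^ Suc I}"
    then have kX: "X \<le> real k"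
      unfolding X_def by (auto simp: of_nat_le_iff[symmetric])
    have "k \<ge> 1"
      using k by (auto intro: le_trans[OF one_le_power])
    then have "srw_kernel k 0 \<le> 1 / sqrt (real k)"
      by (rule srw_kernel_diagonal_le)
    also have "\<dots> \<le> 1 / sqrt X"
      using kX X by (intro divide_left_mono real_sqrt_le_mono) auto
    finally have "srw_kernel k 0 \<le> X powr (-1/2)"
      using X by (simp add: powr_minus_divide powr_half_sqrt)
    then show "srw_kernel k 0 * height_kernel s k 0 \<le> X powr (-1/2) * height_kernel s k 0"
      by (intro mult_right_mono height_kernel_nonneg)
  qed
  also have "\<dots> = X powr (-1/2) * (height_visits_0 (2 ^ Suc I) - height_visits_0 (2 ^ I))"
    by (simp only: height_visits_0_diff[of "2 ^ I" "2 ^ Suc I"] power_increasing_iff sum_distrib_left)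
  also have "\<dots> \<le> X powr (-1/2) * height_visits_0 (2 ^ Suc I)"
    using height_visits_0_nonneg[of "2 ^ I"] by (intro mult_left_mono) auto
  also have "\<dots> \<le> X powr (-1/2) * (2 * scale_upper_const * real (2 ^ Suc I) powr ((1 + s) / 2))"
    by (intro mult_left_mono height_visits_0_le) simp
  also have "real (2 ^ Suc I) = 2 * X"
    by (simp add: X_def)
  also have "X powr (-1/2) * (2 * scale_upper_const * (2 * X) powr ((1 + s) / 2))
      = 2 * scale_upper_const * 2 powr ((1 + s) / 2) * (X powr (-1/2) * X powr ((1 + s) / 2))"
    by (simp add: powr_mult)
  also have "X powr (-1/2) * X powr ((1 + s) / 2) = X powr (s / 2)"
    by (simp add: powr_add[symmetric] add_divide_distrib)
  finally show ?thesis
    by (simp add: X_def)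
qed

lemma diagonal_sum_le: "(\<Sum>k<2 ^ I. srw_kernel k 0 * height_kernel s k 0) \<le> diagonal_const * (2 ^ I) powr (s / 2)"
proof (induction I)
  case 0
  then show ?case using diagonal_const_ge_1 by simp
next
  case (Suc I)
  let ?X = "(2::real) ^ I"
  have split: "{..<(2::nat) ^ Suc I} = {..<2 ^ I} \<union> {2 ^ I..<2 ^ Suc I}"
    by auto
  have "(\<Sum>k<2 ^ Suc I. srw_kernel k 0 * height_kernel s k 0)
      = (\<Sum>k<2 ^ I. srw_kernel k 0 * height_kernel s k 0) + (\<Sum>k\<in>{2 ^ I..<2 ^ Suc I}. srw_kernel k 0 * height_kernel s k 0)"
    unfolding split by (rule sum.union_disjoint) auto
  also have "\<dots> \<le> diagonal_const * ?X powr (s / 2) + diagonal_const * (2 powr (s / 2) - 1) * ?X powr (s / 2)"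
    using Suc dyadic_block_le[of I] mult_right_mono[OF diagonal_const_ge powr_ge_zero[of ?X "s / 2"]]
    by linarith
  also have "\<dots> = diagonal_const * (2 * ?X) powr (s / 2)"
    by (simp add: powr_mult algebra_simps)
  finally show ?case
    by simp
qed

definition green_const :: real where
  "green_const = 24 * diagonal_const * (144 * real mixing_const) powr (s / 2)"

lemma green_const_pos: "0 < green_const"
  using diagonal_const_ge_1 mixing_const_ge_1 by (simp add: green_const_def)

lemma killed_kernel_diagonal_le: "snd y = 0 \<Longrightarrow> killed_kernel s A k y y \<le> srw_kernel k 0 * height_kernel s k 0"
  using killed_kernel_le_free[of A k y y] free_killed_kernel_factor[of y k y] by simp

lemma dyadic_time_powr_le:
  assumes n: "n \<ge> 1" and I: "2 ^ I < 2 * (mixing_const * (2 * (4 * n + 2)\<^sup>2))"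
  shows "((2::real) ^ I) powr (s / 2) \<le> (144 * real mixing_const) powr (s / 2) * real n powr s"
proof -
  let ?m = "2 * (4 * n + 2)\<^sup>2"
  have "real ?m = 2 * (4 * real n + 2)\<^sup>2"
    by simp
  also have "\<dots> \<le> 2 * (6 * real n)\<^sup>2"
    using n by (intro mult_left_mono power_mono) auto
  finally have m_le: "real ?m \<le> 72 * (real n)\<^sup>2"
    by (simp add: power2_eq_square)
  have "real (2 ^ I) \<le> real (2 * (mixing_const * ?m))"
    using I by linarith
  then have "(2::real) ^ I \<le> 2 * real mixing_const * real ?m"
    by simp
  also have "\<dots> \<le> 2 * real mixing_const * (72 * (real n)\<^sup>2)"
    using m_le by (intro mult_left_mono) auto
  finally have "((2::real) ^ I) powr (s / 2) \<le> (144 * real mixing_const * (real n)\<^sup>2) powr (s / 2)"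
    using s_pos by (intro powr_mono2) auto
  also have "\<dots> = (144 * real mixing_const) powr (s / 2) * real n powr s"
    by (simp add: powr_mult powr_powr flip: powr_numeral)
  finally show ?thesis .
qed

lemma killed_green_partial_le:
  assumes n: "n \<ge> 1" and k: "\<bar>k1\<bar> \<le> int n" "\<bar>k2\<bar> \<le> int n"
  shows "(\<Sum>k<N. killed_kernel s (Lset n) k (2 * k1, 0) (2 * k2, 0)) \<le> green_const * real n powr s"
proof -
  let ?m = "2 * (4 * n + 2)\<^sup>2" and ?y = "(2 * k2, 0)"
  obtain I where I: "mixing_const * ?m \<le> 2 ^ I" "2 ^ I < 2 * (mixing_const * ?m)"
    using ex_power_of_two_between[of "mixing_const * ?m"] mixing_const_ge_1 by auto
  have y: "?y \<notin> Lset n"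
    using k by (auto simp: Lset_def)
  have "(\<Sum>k<N. killed_kernel s (Lset n) k (2 * k1, 0) ?y) \<le> (\<Sum>k<N. killed_kernel s (Lset n) k ?y ?y)"
    by (rule killed_green_le_diagonal[OF y])
  also have "\<dots> \<le> 24 * (\<Sum>k<2 ^ I. killed_kernel s (Lset n) k ?y ?y)"
    using k by (intro killed_green_diagonal_renewal[OF y] survival_le I(1)) auto
  also have "\<dots> \<le> 24 * (\<Sum>k<2 ^ I. srw_kernel k 0 * height_kernel s k 0)"
    by (intro mult_left_mono sum_mono killed_kernel_diagonal_le) auto
  also have "\<dots> \<le> 24 * (diagonal_const * ((144 * real mixing_const) powr (s / 2) * real n powr s))"
    using diagonal_sum_le[of I] mult_left_mono[OF dyadic_time_powr_le[OF n I(2)] diagonal_const_ge_1[THEN order_trans[OF zero_le_one]]]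
    by linarith
  finally show ?thesis
    by (simp add: green_const_def mult_ac)
qed

end

theorem proposition6p2:
  fixes s :: real
  assumes "0 < s" and "s < 1"
  shows "\<exists>C>0. \<forall>n::nat. n \<ge> 1 \<longrightarrow>
           (\<forall>k1 k2 :: int. \<bar>k1\<bar> \<le> int n \<and> \<bar>k2\<bar> \<le> int n \<longrightarrow>
              green s n (2 * k1, 0) (2 * k2, 0) \<le> ennreal (C * real n powr ((s + 2) - 2)))"
proof -
  interpret drift_param s
    using assms by unfold_locales
  have "green s n (2 * k1, 0) (2 * k2, 0) \<le> ennreal (green_const * real n powr s)"
    if "n \<ge> 1" "\<bar>k1\<bar> \<le> int n" "\<bar>k2\<bar> \<le> int n" for n k1 k2
    unfolding green_def killed_prob_eq_killed_kernel
  proof (rule suminf_le_const)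
    show "(\<Sum>k<N. ennreal (killed_kernel s (Lset n) k (2 * k1, 0) (2 * k2, 0))) \<le> ennreal (green_const * real n powr s)" for N
      using killed_green_partial_le[OF that]
      by (simp add: sum_ennreal killed_kernel_nonneg ennreal_leI)
  qed simp
  then show ?thesis
    using green_const_pos by auto
qed

end
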